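(* There exist $\alpha_0 < \infty$, $c > 0$ and $n_0 \in \mathbb N$ such that for all $n \geq n_0$, $\alpha > \alpha_0$, $y \in \Lambda_n$, every weakly $y$-admissible set $A$, every $\gamma_0 \in \mathcal L_A^{y \to \ell_n}$, and every pre-regeneration point $x \in \gamma_0$ with $\bar x - \bar y \geq \log n$, $$\mathbb P_A^{y \to \ell_n}\big(x \text{ is a regeneration point} \,\big|\, \gamma = \gamma_0\big) > c.$$
   Context: $\Lambda_n=([0,n]\times(-n/2,n/2]^{d-1})\cap\mathbb Z^d$ with nearest-neighbour edges and periodic boundary conditions in the last $d-1$ coordinates; points $x=(\bar x,\hat x)$; $\ell_j=\{x:\bar x=j\}$. For $A\subset\Lambda_n$, $\mathcal S_A^{a\to z}$ is the set of maps $\pi:A\to A$ that are bijections from $A\setminus\{z\}$ onto $A\setminus\{a\}$, with $\pi(z)=z$ and each $\pi(u)$ equal to $u$ or a neighbour of $u$; $\mathcal S_A^{a\to\ell_n}=\bigcup_{z\in\ell_n}\mathcal S_{A\cup\{z\}}^{a\to z}$ with probability $\mathbb P_A^{a\to\ell_n}(\pi)\propto\exp(-\alpha\sum_u\mathbb 1\{\pi(u)\ne u\})$; $\gamma(\pi)=\{\pi^j(a):j\ge0\}$ ordered by appearance. $\mathcal L_A^{y\to\ell_n}$ is the set of (vertex sets, with their visiting order, of) self-avoiding nearest-neighbour walks in $A$ from $y$ to some point of $\ell_n$. $\mathcal C_w=\{u:\bar u-\bar w\ge|\hat u-\hat w|\}\cup\{u:\bar u\ge\bar w+\log n\}$ (transverse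 distance $|\hat u-\hat w|$). $A$ is weakly $y$-admissible if $A\supset\{u:\bar u\ge\bar y+\log n\}$; $y$-admissible if moreover $A\supset\{u:\bar u\ge\bar y,\hat u=\hat y\}$; strictly $y$-admissible if moreover $A\supset\mathcal C_y$. A point $x\in\gamma$ is a pre-regeneration point if all $u\in\gamma$ with $u\ge x$ lie in $\mathcal C_x$ and all $u\in\gamma$ with $u<x$ satisfy $\bar u<\bar x$. For $\pi\in\mathcal S_A^{y\to\ell_n}$, let $\pi_0\in\mathcal S_A$ be $\pi_0(u)=u$ for $u\in\gamma(\pi)$ and $\pi_0(u)=\pi(u)$ otherwise. A pre-regeneration point $x$ of $\gamma(\pi)$ is a regeneration point if there is $R\subset A$ with (R1) $R\subset\{u:\bar u\ge\bar x\}$; (R2) $R$ strictly $x$-admissible; (R3) $(\bar u,2\hat x-\hat u)\in R$ whenever $u\in R$ (transverse coordinates modulo the periodic identification); (R4) $\pi_0(R)=R$. *)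

theory Defs
  imports Complex_Main
begin

text \<open>Points of the cylinder are integer lists of length d: the head is the
longitudinal coordinate (x bar), the tail the d-1 transverse coordinates (x hat).\<close>
type_synonym pt = "int list"

definition Lam :: "nat \<Rightarrow> nat \<Rightarrow> pt set" where
  "Lam d n = {x. length x = d \<and> 0 \<le> hd x \<and> hd x \<le> int n \<and>
                 (\<forall>i\<in>set (tl x). - int n < 2 * i \<and> 2 * i \<le> int n)}"

definition ell :: "nat \<Rightarrow> nat \<Rightarrow> nat \<Rightarrow> pt set" where
  "ell d n j = {x \<in> Lam d n. hd x = int j}"

definition tmod :: "nat \<Rightarrow> int \<Rightarrow> int" where
  "tmod n m = (let r = m mod int n in if 2 * r > int n then r - int n else r)"

definition cdist :: "nat \<Rightarrow> int \<Rightarrow> int \<Rightarrow> int" where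
  "cdist n p q = min ((p - q) mod int n) ((q - p) mod int n)"

definition tdist :: "nat \<Rightarrow> int list \<Rightarrow> int list \<Rightarrow> int" where
  "tdist n a b = sum_list (map2 (cdist n) a b)"

definition nbr :: "nat \<Rightarrow> nat \<Rightarrow> pt \<Rightarrow> pt \<Rightarrow> bool" where
  "nbr d n u v \<longleftrightarrow> u \<in> Lam d n \<and> v \<in> Lam d n \<and>
     ((\<bar>hd u - hd v\<bar> = 1 \<and> tl u = tl v) \<or> (hd u = hd v \<and> tdist n (tl u) (tl v) = 1))"

definition Cone :: "nat \<Rightarrow> nat \<Rightarrow> pt \<Rightarrow> pt set" where
  "Cone d n w = {u \<in> Lam d n. tdist n (tl u) (tl w) \<le> hd u - hd w}
              \<union> {u \<in> Lam d n. real_of_int (hd u) \<ge> real_of_int (hd w) + ln (real n)}"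

definition weakly_adm :: "nat \<Rightarrow> nat \<Rightarrow> pt \<Rightarrow> pt set \<Rightarrow> bool" where
  "weakly_adm d n y A \<longleftrightarrow>
     {u \<in> Lam d n. real_of_int (hd u) \<ge> real_of_int (hd y) + ln (real n)} \<subseteq> A"

definition adm :: "nat \<Rightarrow> nat \<Rightarrow> pt \<Rightarrow> pt set \<Rightarrow> bool" where
  "adm d n y A \<longleftrightarrow> weakly_adm d n y A \<and>
     {u \<in> Lam d n. hd u \<ge> hd y \<and> tl u = tl y} \<subseteq> A"

definition strictly_adm :: "nat \<Rightarrow> nat \<Rightarrow> pt \<Rightarrow> pt set \<Rightarrow> bool" where
  "strictly_adm d n y A \<longleftrightarrow> adm d n y A \<and> Cone d n y \<subseteq> A"

text \<open>S_B^{a->z}; maps are represented as total functions equal to the identity off B.\<close>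
definition Sfix :: "nat \<Rightarrow> nat \<Rightarrow> pt set \<Rightarrow> pt \<Rightarrow> pt \<Rightarrow> (pt \<Rightarrow> pt) set" where
  "Sfix d n B a z = {\<pi>. (\<forall>u. u \<notin> B \<longrightarrow> \<pi> u = u) \<and> z \<in> B \<and> \<pi> z = z \<and>
       bij_betw \<pi> (B - {z}) (B - {a}) \<and> (\<forall>u\<in>B. \<pi> u = u \<or> nbr d n u (\<pi> u))}"

definition Sline :: "nat \<Rightarrow> nat \<Rightarrow> pt set \<Rightarrow> pt \<Rightarrow> (pt \<Rightarrow> pt) set" where
  "Sline d n A a = (\<Union>z\<in>ell d n n. Sfix d n (A \<union> {z}) a z)"

definition wt :: "real \<Rightarrow> (pt \<Rightarrow> pt) \<Rightarrow> real" where
  "wt \<alpha> \<pi> = exp (- \<alpha> * real (card {u. \<pi> u \<noteq> u}))"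

definition gam :: "(pt \<Rightarrow> pt) \<Rightarrow> pt \<Rightarrow> pt list" where
  "gam \<pi> a = map (\<lambda>j. (\<pi> ^^ j) a) [0..<Suc (LEAST j. (\<pi> ^^ Suc j) a = (\<pi> ^^ j) a)]"

definition saw :: "nat \<Rightarrow> nat \<Rightarrow> pt set \<Rightarrow> pt \<Rightarrow> pt list \<Rightarrow> bool" where
  "saw d n A y \<gamma> \<longleftrightarrow> \<gamma> \<noteq> [] \<and> hd \<gamma> = y \<and> distinct \<gamma> \<and> set \<gamma> \<subseteq> A \<and>
     last \<gamma> \<in> ell d n n \<and> (\<forall>i. Suc i < length \<gamma> \<longrightarrow> nbr d n (\<gamma> ! i) (\<gamma> ! Suc i))"

text \<open>Pre-regeneration point of a path (order = order of appearance in the list).\<close>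
definition prereg :: "nat \<Rightarrow> nat \<Rightarrow> pt list \<Rightarrow> pt \<Rightarrow> bool" where
  "prereg d n \<gamma> x \<longleftrightarrow> x \<in> set \<gamma> \<and>
     (\<forall>i k. i < length \<gamma> \<longrightarrow> k < length \<gamma> \<longrightarrow> \<gamma> ! k = x \<longrightarrow>
        (k \<le> i \<longrightarrow> \<gamma> ! i \<in> Cone d n x) \<and> (i < k \<longrightarrow> hd (\<gamma> ! i) < hd x))"

definition pi0 :: "(pt \<Rightarrow> pt) \<Rightarrow> pt \<Rightarrow> pt \<Rightarrow> pt" where
  "pi0 \<pi> a = (\<lambda>u. if u \<in> set (gam \<pi> a) then u else \<pi> u)"

definition refl_pt :: "nat \<Rightarrow> pt \<Rightarrow> pt \<Rightarrow> pt" where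
  "refl_pt n x u = hd u # map2 (\<lambda>xi ui. tmod n (2 * xi - ui)) (tl x) (tl u)"

definition regen :: "nat \<Rightarrow> nat \<Rightarrow> pt set \<Rightarrow> pt \<Rightarrow> (pt \<Rightarrow> pt) \<Rightarrow> pt \<Rightarrow> bool" where
  "regen d n A a \<pi> x \<longleftrightarrow> prereg d n (gam \<pi> a) x \<and>
     (\<exists>R. R \<subseteq> A \<and> (\<forall>u\<in>R. hd x \<le> hd u) \<and> strictly_adm d n x R \<and>
          (\<forall>u\<in>R. refl_pt n x u \<in> R) \<and> pi0 \<pi> a ` R = R)"

definition cond_prob :: "nat \<Rightarrow> nat \<Rightarrow> real \<Rightarrow> pt set \<Rightarrow> pt \<Rightarrow> pt list \<Rightarrow> pt \<Rightarrow> real" where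
  "cond_prob d n \<alpha> A a \<gamma>0 x =
     (\<Sum>\<pi>\<in>{\<pi> \<in> Sline d n A a. gam \<pi> a = \<gamma>0 \<and> regen d n A a \<pi> x}. wt \<alpha> \<pi>) /
     (\<Sum>\<pi>\<in>{\<pi> \<in> Sline d n A a. gam \<pi> a = \<gamma>0}. wt \<alpha> \<pi>)"

end

theory Submission
  imports Defs "HOL-Library.FuncSet"
begin

text \<open>Conditioned on the path g, pi0 is the identity on g and an injective
nearest-neighbour map elsewhere, so off g it decomposes into cycles. Call two points
linked if one is mapped to the other by pi0 or by the reflection through x. The set R of
points from which no chain of links descends below the level of x is invariant under pi0
and the reflection and, once it contains the cone C_x, witnesses that x regenerates. So x
fails to regenerate only if some chain of links descends from a cone point u by more than
hd u - hd x levels. A Peierls argument bounds the conditional probability of descending k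
levels by rho^k: the chain must start with the cycle through u (or its mirror image),
removing that cycle costs a factor exp(-alpha * length), and the descent continues from
the cycle. Summing rho^(hd u - hd x + 1) over the cone gives at most 1/2.\<close>

section \<open>Geometry of the cylinder\<close>

lemma tmod_mod: "n \<ge> 1 \<Longrightarrow> tmod n m mod int n = m mod int n"
  unfolding tmod_def Let_def by auto

lemma tmod_bounds: "n \<ge> 1 \<Longrightarrow> - int n < 2 * tmod n m \<and> 2 * tmod n m \<le> int n"
proof -
  assume n: "n \<ge> 1"
  have "0 \<le> m mod int n" "m mod int n < int n" using n by simp_all
  then show ?thesis unfolding tmod_def Let_def by auto
qed

lemma tmod_eq_self:
  assumes n: "n \<ge> 1" and m: "- int n < 2 * m" "2 * m \<le> int n"
  shows "tmod n m = m"
proof (cases "m \<ge> 0")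
  case True
  then have "m mod int n = m" using m n by (intro mod_pos_pos_trivial) auto
  then show ?thesis using m unfolding tmod_def Let_def by auto
next
  case False
  have "(m + int n) mod int n = m + int n" using m n False by (intro mod_pos_pos_trivial) linarith+
  then have "m mod int n = m + int n" by simp
  then show ?thesis using m False unfolding tmod_def Let_def by auto
qed

lemma tmod_cong: "a mod int n = b mod int n \<Longrightarrow> tmod n a = tmod n b"
  unfolding tmod_def by simp

lemma cdist_nonneg: "n \<ge> 1 \<Longrightarrow> 0 \<le> cdist n p q"
  unfolding cdist_def by simp

lemma cdist_self: "cdist n p p = 0"
  unfolding cdist_def by simp

lemma cdist_commute: "cdist n p q = cdist n q p"
  unfolding cdist_def by simp

lemma cdist_less: "n \<ge> 1 \<Longrightarrow> cdist n p q < int n"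
  unfolding cdist_def by (simp add: min_less_iff_disj)

lemma mem_tmod_image_window:
  assumes n: "n \<ge> 1" and p: "- int n < 2 * p" "2 * p \<le> int n" and pq: "cdist n p q \<le> h"
  shows "p \<in> tmod n ` {q - h..q + h}"
proof -
  have p_eq: "tmod n p = p" using tmod_eq_self[OF n p] .
  have "(p - q) mod int n \<le> h \<or> (q - p) mod int n \<le> h" using pq unfolding cdist_def by linarith
  then show ?thesis
  proof
    assume h: "(p - q) mod int n \<le> h"
    let ?r = "(p - q) mod int n"
    have "0 \<le> ?r" using n by simp
    moreover have "(q + ?r) mod int n = p mod int n" by (simp add: mod_add_right_eq)
    ultimately show ?thesis using h p_eq tmod_cong[of "q + ?r" n p]
      by (intro image_eqI[of _ _ "q + ?r"]) auto
  next
    assume h: "(q - p) mod int n \<le> h"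
    let ?r = "(q - p) mod int n"
    have "0 \<le> ?r" using n by simp
    moreover have "(q - ?r) mod int n = p mod int n" by (simp add: mod_diff_right_eq)
    ultimately show ?thesis using h p_eq tmod_cong[of "q - ?r" n p]
      by (intro image_eqI[of _ _ "q - ?r"]) auto
  qed
qed

lemma tdist_nonneg: "n \<ge> 1 \<Longrightarrow> 0 \<le> tdist n a b"
  unfolding tdist_def by (intro sum_list_nonneg) (auto simp: cdist_nonneg set_zip)

lemma tdist_self: "tdist n a a = 0"
  unfolding tdist_def by (induction a) (auto simp: cdist_self)

lemma cdist_nth_le_tdist:
  assumes "length a = length b" "i < length a" "n \<ge> 1"
  shows "cdist n (a ! i) (b ! i) \<le> tdist n a b"
  using assms
proof (induction a b arbitrary: i rule: list_induct2)
  case Nil then show ?case by simp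
next
  case (Cons u a v b)
  have split: "tdist n (u # a) (v # b) = cdist n u v + tdist n a b" unfolding tdist_def by simp
  show ?case
  proof (cases i)
    case 0 then show ?thesis using split tdist_nonneg[OF Cons.prems(2)] by simp
  next
    case (Suc j)
    then show ?thesis using Cons.IH[of j] Cons.prems split cdist_nonneg[of n u v] by simp
  qed
qed

lemma finite_card_lists_componentwise:
  assumes "\<And>i. i < k \<Longrightarrow> finite (T i)"
  shows "finite {v. length v = k \<and> (\<forall>i<k. v ! i \<in> T i)} \<and>
         card {v. length v = k \<and> (\<forall>i<k. v ! i \<in> T i)} \<le> (\<Prod>i<k. card (T i))"
  using assms
proof (induction k arbitrary: T)
  case 0
  have "{v. length v = 0 \<and> (\<forall>i<0. v ! i \<in> T i)} = {[]}" by auto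
  then show ?case by simp
next
  case (Suc k)
  let ?S = "{v. length v = k \<and> (\<forall>i<k. v ! i \<in> T (Suc i))}"
  have IH: "finite ?S \<and> card ?S \<le> (\<Prod>i<k. card (T (Suc i)))"
    using Suc.IH[of "\<lambda>i. T (Suc i)"] Suc.prems by auto
  have eq: "{v. length v = Suc k \<and> (\<forall>i<Suc k. v ! i \<in> T i)} = (\<lambda>(a, ys). a # ys) ` (T 0 \<times> ?S)"
  proof (rule set_eqI, rule iffI)
    fix v assume "v \<in> {v. length v = Suc k \<and> (\<forall>i<Suc k. v ! i \<in> T i)}"
    then obtain a ys where v: "v = a # ys" "length ys = k" and h: "\<forall>i<Suc k. v ! i \<in> T i"
      by (cases v) auto
    then have "a \<in> T 0" "ys \<in> ?S" by auto
    then show "v \<in> (\<lambda>(a, ys). a # ys) ` (T 0 \<times> ?S)" using v by auto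
  next
    fix v assume "v \<in> (\<lambda>(a, ys). a # ys) ` (T 0 \<times> ?S)"
    then show "v \<in> {v. length v = Suc k \<and> (\<forall>i<Suc k. v ! i \<in> T i)}"
      by (auto simp: less_Suc_eq_0_disj)
  qed
  have f0: "finite (T 0)" using Suc.prems by auto
  have "card ((\<lambda>(a, ys). a # ys) ` (T 0 \<times> ?S)) \<le> card (T 0) * card ?S"
    using card_image_le[of "T 0 \<times> ?S" "\<lambda>(a, ys). a # ys"] IH f0 by (simp add: card_cartesian_product)
  also have "\<dots> \<le> card (T 0) * (\<Prod>i<k. card (T (Suc i)))" using IH by simp
  also have "\<dots> = (\<Prod>i<Suc k. card (T i))" by (rule prod.lessThan_Suc_shift[symmetric])
  finally show ?case using eq IH f0 by auto
qed

lemma Lam_length: "u \<in> Lam d n \<Longrightarrow> length u = d"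
  unfolding Lam_def by auto

lemma Lam_hd_bounds: "u \<in> Lam d n \<Longrightarrow> 0 \<le> hd u \<and> hd u \<le> int n"
  unfolding Lam_def by auto

lemma Lam_tl_bounds: "u \<in> Lam d n \<Longrightarrow> i \<in> set (tl u) \<Longrightarrow> - int n < 2 * i \<and> 2 * i \<le> int n"
  unfolding Lam_def by auto

lemma finite_Lam: "finite (Lam d n)"
proof -
  have "Lam d n \<subseteq> {v. set v \<subseteq> {- int n..int n} \<and> length v = d}"
  proof
    fix v assume v: "v \<in> Lam d n"
    have "set v \<subseteq> {- int n..int n}"
    proof (cases v)
      case (Cons a w)
      then show ?thesis using Lam_hd_bounds[OF v] Lam_tl_bounds[OF v] by fastforce
    qed simp
    then show "v \<in> {v. set v \<subseteq> {- int n..int n} \<and> length v = d}" using Lam_length[OF v] by simp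
  qed
  moreover have "finite {v. set v \<subseteq> {- int n..int n} \<and> length v = d}"
    by (rule finite_lists_length_eq) simp
  ultimately show ?thesis by (rule finite_subset)
qed

definition box_coord :: "nat \<Rightarrow> pt \<Rightarrow> nat \<Rightarrow> nat \<Rightarrow> int set" where
  "box_coord n a h i = (if i = 0 then {hd a - int h..hd a + int h}
                        else tmod n ` {tl a ! (i - 1) - int h..tl a ! (i - 1) + int h})"

definition box :: "nat \<Rightarrow> nat \<Rightarrow> pt \<Rightarrow> nat \<Rightarrow> pt set" where
  "box d n a h = {v. length v = d \<and> (\<forall>i<d. v ! i \<in> box_coord n a h i)}"

lemma finite_card_box_coord: "finite (box_coord n a h i) \<and> card (box_coord n a h i) \<le> 2 * h + 1"
proof -
  have card_interval: "card {c - int h..c + int h} = 2 * h + 1" for c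
    by (simp add: nat_add_distrib nat_mult_distrib)
  then show ?thesis
    unfolding box_coord_def
    using card_image_le[of "{tl a ! (i - 1) - int h..tl a ! (i - 1) + int h}" "tmod n"] by simp
qed

lemma finite_card_box: "finite (box d n a h) \<and> card (box d n a h) \<le> (2 * h + 1) ^ d"
proof -
  have "finite (box d n a h) \<and> card (box d n a h) \<le> (\<Prod>i<d. card (box_coord n a h i))"
    unfolding box_def by (rule finite_card_lists_componentwise) (simp add: finite_card_box_coord)
  moreover have "(\<Prod>i<d. card (box_coord n a h i)) \<le> (\<Prod>i<d. 2 * h + 1)"
    using finite_card_box_coord by (intro prod_mono) auto
  ultimately show ?thesis by simp
qed

lemma mem_boxI:
  assumes n: "n \<ge> 1" and d: "d \<ge> 1" and a: "a \<in> Lam d n" and v: "v \<in> Lam d n"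
    and hd_close: "\<bar>hd v - hd a\<bar> \<le> int h"
    and tl_close: "\<And>i. i < d - 1 \<Longrightarrow> cdist n (tl v ! i) (tl a ! i) \<le> int h"
  shows "v \<in> box d n a h"
  unfolding box_def
proof (intro CollectI conjI allI impI)
  show lv: "length v = d" using Lam_length[OF v] .
  fix i assume i: "i < d"
  show "v ! i \<in> box_coord n a h i"
  proof (cases i)
    case 0
    have "v ! 0 = hd v" using lv d by (cases v) auto
    then show ?thesis using 0 hd_close unfolding box_coord_def by auto
  next
    case (Suc j)
    have vi: "v ! i = tl v ! j" using lv d Suc by (cases v) auto
    have "tl v ! j \<in> set (tl v)" using lv i Suc by simp
    then have "- int n < 2 * (tl v ! j) \<and> 2 * (tl v ! j) \<le> int n" using Lam_tl_bounds[OF v] by blast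
    then have "tl v ! j \<in> tmod n ` {tl a ! j - int h..tl a ! j + int h}"
      using mem_tmod_image_window[OF n _ _ tl_close[of j]] i Suc by auto
    then show ?thesis using vi Suc unfolding box_coord_def by simp
  qed
qed

lemma Lam_subset_box:
  assumes n: "n \<ge> 1" and d: "d \<ge> 1" and a: "a \<in> Lam d n"
  shows "Lam d n \<subseteq> box d n a n"
proof
  fix v assume v: "v \<in> Lam d n"
  show "v \<in> box d n a n"
  proof (rule mem_boxI[OF n d a v])
    show "\<bar>hd v - hd a\<bar> \<le> int n" using Lam_hd_bounds[OF a] Lam_hd_bounds[OF v] by auto
    show "cdist n (tl v ! i) (tl a ! i) \<le> int n" for i using cdist_less[OF n] less_imp_le by blast
  qed
qed

lemma card_Lam:
  assumes "n \<ge> 1" "d \<ge> 1" "a \<in> Lam d n"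
  shows "card (Lam d n) \<le> (2 * n + 1) ^ d"
proof -
  have "finite (box d n a n)" "card (box d n a n) \<le> (2 * n + 1) ^ d"
    using finite_card_box by blast+
  then show ?thesis using card_mono[OF _ Lam_subset_box[OF assms]] by linarith
qed

lemma nbr_in_Lam: "nbr d n u v \<Longrightarrow> u \<in> Lam d n \<and> v \<in> Lam d n"
  unfolding nbr_def by auto

lemma nbr_hd_diff: "nbr d n u v \<Longrightarrow> \<bar>hd u - hd v\<bar> \<le> 1"
  unfolding nbr_def by auto

lemma nbr_in_box:
  assumes n: "n \<ge> 1" and d: "d \<ge> 1" and uv: "nbr d n u v"
  shows "v \<in> box d n u 1"
proof -
  have u: "u \<in> Lam d n" and v: "v \<in> Lam d n" using nbr_in_Lam[OF uv] by auto
  show ?thesis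
  proof (rule mem_boxI[OF n d u v])
    show "\<bar>hd v - hd u\<bar> \<le> int 1" using nbr_hd_diff[OF uv] by simp
    fix i assume i: "i < d - 1"
    show "cdist n (tl v ! i) (tl u ! i) \<le> int 1"
    proof (cases "tl u = tl v")
      case False
      then have "tdist n (tl u) (tl v) = 1" using uv unfolding nbr_def by auto
      then show ?thesis
        using cdist_nth_le_tdist[of "tl u" "tl v" i n] Lam_length[OF u] Lam_length[OF v] i n
        by (simp add: cdist_commute)
    qed (simp add: cdist_self)
  qed
qed

lemma finite_card_nbrs:
  assumes "n \<ge> 1" "d \<ge> 1"
  shows "finite {v. nbr d n u v} \<and> card {v. nbr d n u v} \<le> 3 ^ d"
proof -
  have sub: "{v. nbr d n u v} \<subseteq> box d n u 1" using nbr_in_box[OF assms] by auto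
  then show ?thesis using finite_card_box[of d n u 1] card_mono[OF _ sub] finite_subset[OF sub]
    by force
qed

lemma refl_pt_hd: "hd (refl_pt n x u) = hd u"
  unfolding refl_pt_def by simp

lemma refl_pt_in_Lam:
  assumes n: "n \<ge> 1" and d: "d \<ge> 1" and x: "x \<in> Lam d n" and u: "u \<in> Lam d n"
  shows "refl_pt n x u \<in> Lam d n"
proof -
  have "length x = d" "length u = d" using Lam_length x u by auto
  then show ?thesis unfolding Lam_def refl_pt_def
    using Lam_hd_bounds[OF u] tmod_bounds[OF n] d by (auto simp: set_zip)
qed

lemma refl_pt_involution:
  assumes n: "n \<ge> 1" and d: "d \<ge> 1" and x: "x \<in> Lam d n" and u: "u \<in> Lam d n"
  shows "refl_pt n x (refl_pt n x u) = u"
proof -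
  let ?r = "map2 (\<lambda>xi ui. tmod n (2 * xi - ui)) (tl x)"
  have lx: "length x = d" and lu: "length u = d" using Lam_length x u by auto
  have twice: "tmod n (2 * a - tmod n (2 * a - b)) = b" if b: "b \<in> set (tl u)" for a b
  proof -
    have "(2 * a - tmod n (2 * a - b)) mod int n = (2 * a - tmod n (2 * a - b) mod int n) mod int n"
      by (simp add: mod_diff_right_eq)
    also have "\<dots> = b mod int n" using tmod_mod[OF n] by (simp add: mod_diff_right_eq)
    finally have "tmod n (2 * a - tmod n (2 * a - b)) = tmod n b" by (rule tmod_cong)
    also have "\<dots> = b" using tmod_eq_self[OF n] Lam_tl_bounds[OF u b] by blast
    finally show ?thesis .
  qed
  have "?r (?r (tl u)) = tl u"
  proof (rule nth_equalityI)
    show "length (?r (?r (tl u))) = length (tl u)" using lx lu by simp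
    fix i assume "i < length (?r (?r (tl u)))"
    then have "i < length (tl u)" "i < length (tl x)" using lx lu by auto
    then show "?r (?r (tl u)) ! i = tl u ! i" using twice[of "tl u ! i" "tl x ! i"] by simp
  qed
  moreover have "u \<noteq> []" using lu d by auto
  ultimately show ?thesis unfolding refl_pt_def by (cases u) auto
qed

definition nbr_walks :: "nat \<Rightarrow> nat \<Rightarrow> pt \<Rightarrow> nat \<Rightarrow> pt list set" where
  "nbr_walks d n a m = {cs. length cs = Suc m \<and> cs ! 0 = a \<and> (\<forall>i. Suc i < length cs \<longrightarrow> nbr d n (cs ! i) (cs ! Suc i))}"

lemma finite_card_nbr_walks:
  assumes n: "n \<ge> 1" and d: "d \<ge> 1"
  shows "finite (nbr_walks d n a m) \<and> card (nbr_walks d n a m) \<le> (3 ^ d) ^ m"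
proof (induction m arbitrary: a)
  case 0
  have "nbr_walks d n a 0 = {[a]}" unfolding nbr_walks_def by (auto simp: length_Suc_conv)
  then show ?case by simp
next
  case (Suc m)
  let ?N = "{b. nbr d n a b}"
  have fN: "finite ?N" and cN: "card ?N \<le> 3 ^ d" using finite_card_nbrs[OF n d] by auto
  have sub: "nbr_walks d n a (Suc m) \<subseteq> (\<lambda>(b, ws). a # ws) ` (Sigma ?N (\<lambda>b. nbr_walks d n b m))"
  proof
    fix cs assume cs: "cs \<in> nbr_walks d n a (Suc m)"
    then obtain ws where ws: "cs = a # ws" "length ws = Suc m"
      unfolding nbr_walks_def by (cases cs) auto
    have ch: "\<forall>i. Suc i < length cs \<longrightarrow> nbr d n (cs ! i) (cs ! Suc i)" using cs unfolding nbr_walks_def by simp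
    have "nbr d n a (ws ! 0)" using ch[rule_format, of 0] ws by simp
    moreover have "ws \<in> nbr_walks d n (ws ! 0) m"
      unfolding nbr_walks_def using ws ch by (auto simp: nth_Cons_Suc)
    ultimately show "cs \<in> (\<lambda>(b, ws). a # ws) ` (Sigma ?N (\<lambda>b. nbr_walks d n b m))" using ws by force
  qed
  have fS: "finite (Sigma ?N (\<lambda>b. nbr_walks d n b m))" using fN Suc.IH by auto
  have "card (nbr_walks d n a (Suc m)) \<le> card ((\<lambda>(b, ws). a # ws) ` (Sigma ?N (\<lambda>b. nbr_walks d n b m)))"
    using sub fS by (intro card_mono) auto
  also have "\<dots> \<le> card (Sigma ?N (\<lambda>b. nbr_walks d n b m))" using fS by (rule card_image_le)
  also have "\<dots> = (\<Sum>b\<in>?N. card (nbr_walks d n b m))" using fN Suc.IH by (simp add: card_SigmaI)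
  also have "\<dots> \<le> (\<Sum>b\<in>?N. (3 ^ d) ^ m)" using Suc.IH by (intro sum_mono) auto
  also have "\<dots> = card ?N * (3 ^ d) ^ m" by simp
  also have "\<dots> \<le> 3 ^ d * (3 ^ d) ^ m" using cN by simp
  finally show ?case using sub fS finite_subset by (auto simp: power_Suc)
qed

lemma nbr_walk_hd_lower:
  assumes "\<forall>i. Suc i < length cs \<longrightarrow> nbr d n (cs ! i) (cs ! Suc i)" and "i < length cs"
  shows "hd (cs ! 0) - int i \<le> hd (cs ! i)"
  using assms(2)
proof (induction i)
  case (Suc i)
  then have "\<bar>hd (cs ! i) - hd (cs ! Suc i)\<bar> \<le> 1" using assms(1) nbr_hd_diff by blast
  then show ?case using Suc by simp
qed simp

lemma two_mult_add_one_le_three_pow: "2 * real m + 1 \<le> 3 ^ m"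
proof (induction m)
  case 0 then show ?case by simp
next
  case (Suc m)
  have "(1::real) \<le> 3 ^ m" by simp
  then show ?case using Suc by simp
qed

lemma sum_two_thirds_powers_le: "(\<Sum>m\<in>{1..N}. 2 * (1 / 3 :: real) ^ m) \<le> 1 - (1 / 3) ^ N"
proof (induction N)
  case 0 then show ?case by simp
next
  case (Suc N)
  have "(\<Sum>m\<in>{1..Suc N}. 2 * (1 / 3 :: real) ^ m) = (\<Sum>m\<in>{1..N}. 2 * (1 / 3) ^ m) + 2 * (1 / 3) ^ Suc N"
    by (simp add: sum.atLeast1_atMost_eq)
  also have "\<dots> \<le> 1 - (1 / 3) ^ N + 2 * (1 / 3) ^ Suc N" using Suc by simp
  also have "\<dots> = 1 - (1 / 3) ^ Suc N" by simp
  finally show ?case .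
qed

lemma geometric_sum_half_bound:
  assumes "0 \<le> q" "q \<le> (1::real) / 2"
  shows "(\<Sum>h\<in>{0..N}. q ^ h) \<le> 2 - 2 * q ^ (N + 1)"
proof (induction N)
  case 0 then show ?case using assms by simp
next
  case (Suc N)
  have "(\<Sum>h\<in>{0..Suc N}. q ^ h) = (\<Sum>h\<in>{0..N}. q ^ h) + q ^ Suc N" by simp
  also have "\<dots> \<le> 2 - 2 * q ^ (N + 1) + q ^ Suc N" using Suc by simp
  also have "\<dots> \<le> 2 - 2 * q ^ (Suc N + 1)"
  proof -
    have "2 * q ^ (Suc N + 1) = (2 * q) * q ^ Suc N" by simp
    also have "\<dots> \<le> 1 * q ^ Suc N" using assms by (intro mult_right_mono) auto
    finally show ?thesis by simp
  qed
  finally show ?case .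
qed

text \<open>The decay rate of the Peierls bound: small enough that 3^d rho \<le> 1/4, which
controls the cone layers near x, and that rho^(ln n) \<le> n^-(d+1), which controls the
far part of the cone.\<close>

definition rho :: "nat \<Rightarrow> real" where
  "rho d = exp (- (3 * real d + 3))"

lemma rho_bounds:
  assumes d: "d \<ge> 1"
  shows "0 < rho d \<and> rho d \<le> 1 / 16 \<and> 3 ^ d * rho d \<le> 1 / 4"
proof -
  have e: "exp (3 * real d + 3) = exp 3 ^ (d + 1)"
    by (simp add: exp_of_nat_mult[symmetric] algebra_simps exp_add)
  have "(4::real) ^ (d + 1) \<le> exp 3 ^ (d + 1)"
    using exp_ge_add_one_self[of 3] by (intro power_mono) auto
  then have ge: "4 ^ (d + 1) \<le> exp (3 * real d + 3)" using e by simp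
  have r: "rho d = 1 / exp (3 * real d + 3)" unfolding rho_def by (simp only: exp_minus inverse_eq_divide)
  have "(4::real) ^ 2 \<le> 4 ^ (d + 1)" using d by (intro power_increasing) auto
  then have "16 \<le> exp (3 * real d + 3)" using ge by simp
  then have a: "rho d \<le> 1 / 16" unfolding r by (intro divide_left_mono) auto
  have "(3::real) ^ d * 4 \<le> 4 ^ d * 4" by (intro mult_right_mono power_mono) auto
  then have "3 ^ d * 4 \<le> exp (3 * real d + 3)" using ge by simp
  then have "3 ^ d / exp (3 * real d + 3) \<le> 1 / 4" by (simp add: pos_divide_le_eq)
  then have b: "3 ^ d * rho d \<le> 1 / 4" using r by simp
  show ?thesis using a b unfolding rho_def by simp
qed

lemma exp_neg_alpha_le:
  assumes \<alpha>: "\<alpha> > 3 * real d + 3 + ln (9 * 3 ^ d)"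
  shows "exp (- \<alpha>) \<le> rho d / (9 * 3 ^ d)"
proof -
  have "exp (3 * real d + 3 + ln (9 * 3 ^ d)) \<le> exp \<alpha>"
    using \<alpha> by (simp only: exp_le_cancel_iff less_imp_le)
  moreover have "exp (3 * real d + 3 + ln (9 * 3 ^ d)) = exp (3 * real d + 3) * (9 * 3 ^ d)"
    by (simp only: exp_add exp_ln zero_less_numeral zero_less_power mult_pos_pos)
  ultimately have le: "exp (3 * real d + 3) * (9 * 3 ^ d) \<le> exp \<alpha>" by simp
  have "exp (- \<alpha>) = 1 / exp \<alpha>" by (simp add: exp_minus inverse_eq_divide)
  also have "\<dots> \<le> 1 / (exp (3 * real d + 3) * (9 * 3 ^ d))"
  proof -
    have "0 < exp \<alpha> * (exp (3 * real d + 3) * (9 * 3 ^ d))" by (intro mult_pos_pos) simp_all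
    then show ?thesis by (rule divide_left_mono[OF le zero_le_one])
  qed
  also have "\<dots> = rho d / (9 * 3 ^ d)"
  proof -
    have "(1::real) / (a * b) = inverse a / b" for a b by (simp add: divide_inverse)
    then show ?thesis unfolding rho_def exp_minus .
  qed
  finally show ?thesis .
qed

lemma sum_le_sum_over_cover:
  fixes w :: "'a \<Rightarrow> real"
  assumes fT: "finite T" and fD: "finite D" and cov: "\<forall>s\<in>T. \<exists>v\<in>D. s \<in> G v"
    and nn: "\<And>s. w s \<ge> 0" and fG: "\<And>v. finite (G v)"
  shows "sum w T \<le> (\<Sum>v\<in>D. sum w (G v))"
proof -
  have "sum w T \<le> (\<Sum>s\<in>T. \<Sum>v\<in>D. if s \<in> G v then w s else 0)"
  proof (rule sum_mono)
    fix s assume s: "s \<in> T"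
    then obtain v where v: "v \<in> D" "s \<in> G v" using cov by blast
    have "w s = (if s \<in> G v then w s else 0)" using v by simp
    also have "\<dots> \<le> (\<Sum>v\<in>D. if s \<in> G v then w s else 0)"
      using fD v nn by (intro member_le_sum) auto
    finally show "w s \<le> (\<Sum>v\<in>D. if s \<in> G v then w s else 0)" .
  qed
  also have "\<dots> = (\<Sum>v\<in>D. \<Sum>s\<in>T. if s \<in> G v then w s else 0)" by (rule sum.swap)
  also have "\<dots> \<le> (\<Sum>v\<in>D. sum w (G v))"
  proof (rule sum_mono)
    fix v assume "v \<in> D"
    have "(\<Sum>s\<in>T. if s \<in> G v then w s else 0) = sum w (T \<inter> G v)"
      using fT by (simp add: sum.If_cases Int_commute)
    also have "\<dots> \<le> sum w (G v)" using fG nn by (intro sum_mono2) auto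
    finally show "(\<Sum>s\<in>T. if s \<in> G v then w s else 0) \<le> sum w (G v)" .
  qed
  finally show ?thesis .
qed

lemma wt_pos: "wt \<alpha> \<pi> > 0"
  unfolding wt_def by simp

lemma wt_nonneg: "wt \<alpha> \<pi> \<ge> 0"
  using wt_pos less_imp_le by blast

definition decay :: "real \<Rightarrow> int \<Rightarrow> real" where
  "decay \<rho> k = (if k \<le> 0 then 1 else \<rho> ^ nat k)"

lemma decay_nonneg: "0 < \<rho> \<Longrightarrow> decay \<rho> k \<ge> 0"
  unfolding decay_def by simp

lemma decay_shift:
  assumes \<rho>: "0 < \<rho>" "\<rho> \<le> 1" and k: "k \<ge> 1"
  shows "decay \<rho> (k - int m) \<le> decay \<rho> k / \<rho> ^ m"
proof (cases "k - int m \<le> 0")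
  case True
  have "\<rho> ^ m \<le> \<rho> ^ nat k" using True \<rho> by (intro power_decreasing) auto
  then show ?thesis using True k \<rho> unfolding decay_def by simp
next
  case False
  then have "nat k = nat (k - int m) + m" by simp
  then have "\<rho> ^ nat (k - int m) = \<rho> ^ nat k / \<rho> ^ m" using \<rho> by (simp add: power_add)
  then show ?thesis using False k unfolding decay_def by simp
qed

definition cycle_list :: "('a \<Rightarrow> 'a) \<Rightarrow> 'a \<Rightarrow> 'a list" where
  "cycle_list q c = map (\<lambda>i. (q ^^ i) c) [0..<(LEAST m. 0 < m \<and> (q ^^ m) c = c)]"

locale periodic_point =
  fixes q :: "'a \<Rightarrow> 'a" and c :: 'a
  assumes periodic: "\<exists>m>0. (q ^^ m) c = c" and moved: "q c \<noteq> c"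
begin

definition period where "period = (LEAST m. 0 < m \<and> (q ^^ m) c = c)"

lemma period_pos: "0 < period" and funpow_period: "(q ^^ period) c = c"
  using LeastI_ex[OF periodic] unfolding period_def by auto

lemma funpow_before_period: "0 < j \<Longrightarrow> j < period \<Longrightarrow> (q ^^ j) c \<noteq> c"
  unfolding period_def using not_less_Least by blast

lemma period_ge_2: "period \<ge> 2"
proof (rule ccontr)
  assume "\<not> period \<ge> 2"
  then have "period = 1" using period_pos by simp
  then show False using funpow_period moved by simp
qed

lemma length_cycle_list: "length (cycle_list q c) = period"
  unfolding cycle_list_def period_def[symmetric] by simp

lemma nth_cycle_list: "i < period \<Longrightarrow> cycle_list q c ! i = (q ^^ i) c"
  unfolding cycle_list_def period_def[symmetric] by simp

lemma distinct_cycle_list: "distinct (cycle_list q c)"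
proof -
  have "inj_on (\<lambda>k. (q ^^ k) c) {0..<period}"
    using period_pos funpow_period funpow_before_period by (intro inj_on_funpow_least) auto
  then show ?thesis unfolding cycle_list_def period_def[symmetric] by (simp add: distinct_map)
qed

lemma cycle_list_step:
  assumes "i < period"
  shows "q (cycle_list q c ! i) = cycle_list q c ! ((i + 1) mod period)"
proof (cases "i + 1 < period")
  case False
  then have "i + 1 = period" using assms by simp
  then have "q ((q ^^ i) c) = c" using funpow_period by (metis Suc_eq_plus1 comp_apply funpow.simps(2))
  then show ?thesis using nth_cycle_list assms period_ge_2 \<open>i + 1 = period\<close> by simp
qed (use nth_cycle_list assms in simp)

lemma cycle_list_moved: "v \<in> set (cycle_list q c) \<Longrightarrow> q v \<noteq> v"
proof -
  assume "v \<in> set (cycle_list q c)"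
  then obtain i where i: "i < period" "v = cycle_list q c ! i" by (metis in_set_conv_nth length_cycle_list)
  have "(i + 1) mod period \<noteq> i"
  proof (cases "i + 1 < period")
    case False
    then have "i + 1 = period" using i by simp
    then show ?thesis using period_ge_2 by simp
  qed simp
  then show "q v \<noteq> v"
    using cycle_list_step i distinct_cycle_list period_ge_2 by (simp add: nth_eq_iff_index_eq length_cycle_list)
qed

lemma image_cycle_list: "q ` set (cycle_list q c) = set (cycle_list q c)"
proof
  show "q ` set (cycle_list q c) \<subseteq> set (cycle_list q c)"
  proof
    fix w assume "w \<in> q ` set (cycle_list q c)"
    then obtain i where "i < period" "w = q (cycle_list q c ! i)"
      by (metis imageE in_set_conv_nth length_cycle_list)
    moreover have "(i + 1) mod period < period" using period_pos by simp
    ultimately show "w \<in> set (cycle_list q c)" using cycle_list_step by (simp add: length_cycle_list)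
  qed
  show "set (cycle_list q c) \<subseteq> q ` set (cycle_list q c)"
  proof
    fix v assume "v \<in> set (cycle_list q c)"
    then obtain j where j: "j < period" "v = cycle_list q c ! j"
      by (metis in_set_conv_nth length_cycle_list)
    obtain i where i: "i < period" "(i + 1) mod period = j"
    proof (cases j)
      case 0
      then show ?thesis using that[of "period - 1"] period_pos by simp
    next
      case (Suc i)
      then show ?thesis using that[of i] j by simp
    qed
    then have "v = q (cycle_list q c ! i)" using cycle_list_step j by simp
    then show "v \<in> q ` set (cycle_list q c)" using i by (simp add: length_cycle_list)
  qed
qed

end

definition remove_cycle :: "'a set \<Rightarrow> ('a \<Rightarrow> 'a) \<Rightarrow> 'a \<Rightarrow> 'a" where
  "remove_cycle C \<pi> = (\<lambda>v. if v \<in> C then v else \<pi> v)"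

section \<open>Orbit structure of the maps in Sfix\<close>

locale Sfix_map =
  fixes d n :: nat and B :: "pt set" and y z :: pt and \<pi> :: "pt \<Rightarrow> pt"
  assumes finite_B: "finite B" and y_in_B: "y \<in> B" and in_Sfix: "\<pi> \<in> Sfix d n B y z"
begin

lemma fixes_outside: "u \<notin> B \<Longrightarrow> \<pi> u = u"
  and z_in_B: "z \<in> B" and fixes_z: "\<pi> z = z"
  and bij_B: "bij_betw \<pi> (B - {z}) (B - {y})"
  and moves_to_nbr: "u \<in> B \<Longrightarrow> \<pi> u = u \<or> nbr d n u (\<pi> u)"
  using in_Sfix unfolding Sfix_def by auto

lemma inj_on_B: "inj_on \<pi> (B - {z})"
  using bij_B by (simp add: bij_betw_def)

lemma image_B: "\<pi> ` (B - {z}) = B - {y}"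
  using bij_B by (simp add: bij_betw_def)

lemma maps_B: "v \<in> B \<Longrightarrow> \<pi> v \<in> B"
  using image_B fixes_z by (cases "v = z") auto

lemma not_onto_y: "v \<in> B \<Longrightarrow> v \<noteq> z \<Longrightarrow> \<pi> v \<noteq> y"
  using image_B by auto

lemma inj_onD_B: "\<pi> a = \<pi> b \<Longrightarrow> a \<in> B \<Longrightarrow> b \<in> B \<Longrightarrow> a \<noteq> z \<Longrightarrow> b \<noteq> z \<Longrightarrow> a = b"
  using inj_on_B by (meson DiffI inj_on_contraD singletonD)

lemma iter_in_B: "(\<pi> ^^ j) y \<in> B"
  by (induction j) (auto simp: y_in_B maps_B)

text \<open>If the orbit of y never became stationary it would be injective (nothing but z
can be mapped back to the orbit's start y), contradicting finiteness of B.\<close>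

lemma orbit_stops: "\<exists>j. (\<pi> ^^ Suc j) y = (\<pi> ^^ j) y"
proof (rule ccontr)
  assume moving: "\<not> ?thesis"
  then have not_z: "(\<pi> ^^ j) y \<noteq> z" for j
    using fixes_z by (metis funpow.simps(2) o_apply)
  have distinct_iter: "\<forall>j. i < j \<longrightarrow> (\<pi> ^^ i) y \<noteq> (\<pi> ^^ j) y" for i
  proof (induction i)
    case 0
    show ?case
    proof (intro allI impI)
      fix j :: nat assume "0 < j"
      then obtain j' where j': "j = Suc j'" by (cases j) auto
      show "(\<pi> ^^ 0) y \<noteq> (\<pi> ^^ j) y"
        using not_onto_y[OF iter_in_B not_z, of j'] j' by simp
    qed
  next
    case (Suc i)
    show ?case
    proof (intro allI impI)
      fix j :: nat assume j: "Suc i < j"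
      then obtain j' where j': "j = Suc j'" by (cases j) auto
      then have "(\<pi> ^^ i) y \<noteq> (\<pi> ^^ j') y" using Suc.IH j by auto
      then have "\<pi> ((\<pi> ^^ i) y) \<noteq> \<pi> ((\<pi> ^^ j') y)"
        using inj_onD_B[OF _ iter_in_B iter_in_B not_z not_z] by blast
      then show "(\<pi> ^^ Suc i) y \<noteq> (\<pi> ^^ j) y" using j' by simp
    qed
  qed
  then have "inj (\<lambda>j. (\<pi> ^^ j) y)"
    by (intro injI) (metis linorder_neqE_nat)
  moreover have "finite (range (\<lambda>j. (\<pi> ^^ j) y))"
    using iter_in_B finite_B by (auto intro: finite_subset)
  ultimately have "finite (UNIV :: nat set)" by (rule finite_imageD[rotated])
  then show False by simp
qed

definition stop_time where "stop_time = (LEAST j. (\<pi> ^^ Suc j) y = (\<pi> ^^ j) y)"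

lemma stop_time_fixed: "(\<pi> ^^ Suc stop_time) y = (\<pi> ^^ stop_time) y"
  unfolding stop_time_def using orbit_stops by (rule LeastI_ex)

lemma moving_before_stop_time: "j < stop_time \<Longrightarrow> (\<pi> ^^ Suc j) y \<noteq> (\<pi> ^^ j) y"
  unfolding stop_time_def using not_less_Least by blast

lemma iter_after_stop_time: "stop_time \<le> j \<Longrightarrow> (\<pi> ^^ j) y = (\<pi> ^^ stop_time) y"
proof (induction j rule: dec_induct)
  case (step j)
  then show ?case using stop_time_fixed by simp
qed simp

lemma gam_eq: "gam \<pi> y = map (\<lambda>j. (\<pi> ^^ j) y) [0..<Suc stop_time]"
  unfolding gam_def stop_time_def by simp

lemma length_gam: "length (gam \<pi> y) = Suc stop_time"
  by (simp add: gam_eq)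

lemma nth_gam: "j \<le> stop_time \<Longrightarrow> gam \<pi> y ! j = (\<pi> ^^ j) y"
  by (simp add: gam_eq nth_map_upt del: upt_Suc)

lemma set_gam: "set (gam \<pi> y) = {(\<pi> ^^ j) y | j. j \<le> stop_time}"
proof -
  have "set (gam \<pi> y) = (\<lambda>j. (\<pi> ^^ j) y) ` {0..<Suc stop_time}" by (simp add: gam_eq del: upt_Suc)
  then show ?thesis by (auto simp: less_Suc_eq_le)
qed

lemma iter_in_gam: "(\<pi> ^^ j) y \<in> set (gam \<pi> y)"
  using iter_after_stop_time[of j] by (cases "j \<le> stop_time") (auto simp: set_gam)

lemma orbit_ends_at_z: "(\<pi> ^^ stop_time) y = z"
proof (rule ccontr)
  let ?w = "(\<pi> ^^ stop_time) y"
  assume wz: "?w \<noteq> z"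
  have fixed: "\<pi> ?w = ?w" using stop_time_fixed by simp
  then have "?w \<noteq> y" using not_onto_y[OF iter_in_B wz] by simp
  then obtain j where j: "stop_time = Suc j" by (cases stop_time) auto
  let ?v = "(\<pi> ^^ j) y"
  have "\<pi> ?v = ?w" using j by simp
  moreover have "?v \<noteq> ?w" using moving_before_stop_time[of j] j by simp
  moreover have "?v \<noteq> z" using \<open>\<pi> ?v = ?w\<close> fixes_z wz by auto
  ultimately show False using inj_onD_B[of ?v ?w] iter_in_B fixed wz by simp
qed

lemma z_in_gam: "z \<in> set (gam \<pi> y)"
  using iter_in_gam[of stop_time] orbit_ends_at_z by simp

lemma last_gam: "last (gam \<pi> y) = z"
proof -
  have "last (gam \<pi> y) = gam \<pi> y ! stop_time"
    using length_gam by (metis diff_Suc_1 last_conv_nth list.size(3) nat.distinct(1))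
  then show ?thesis using nth_gam[of stop_time] orbit_ends_at_z by simp
qed

text \<open>Off the path, \<pi> never enters the path: the path is an initial segment of the
injective orbit of y, and y itself has no preimage other than z.\<close>

lemma no_entry_into_gam:
  assumes "distinct (gam \<pi> y)" and a: "a \<in> B" "a \<notin> set (gam \<pi> y)"
  shows "\<pi> a \<notin> set (gam \<pi> y)"
proof
  assume "\<pi> a \<in> set (gam \<pi> y)"
  then obtain j where j: "j \<le> stop_time" "\<pi> a = (\<pi> ^^ j) y" by (auto simp: set_gam)
  have az: "a \<noteq> z" using a z_in_gam by auto
  show False
  proof (cases j)
    case 0 then show False using not_onto_y[OF a(1) az] j by simp
  next
    case (Suc i)
    have "gam \<pi> y ! i \<noteq> gam \<pi> y ! stop_time"
      using assms(1) j Suc length_gam by (simp add: nth_eq_iff_index_eq)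
    then have "(\<pi> ^^ i) y \<noteq> z" using nth_gam j Suc orbit_ends_at_z by simp
    then have "a = (\<pi> ^^ i) y" using inj_onD_B[OF _ a(1) iter_in_B az] j Suc by simp
    then show False using a(2) iter_in_gam by simp
  qed
qed

abbreviation p where "p \<equiv> pi0 \<pi> y"

lemma pi0_outside: "v \<notin> B \<Longrightarrow> p v = v"
  unfolding pi0_def using fixes_outside by simp

lemma pi0_maps_B: "v \<in> B \<Longrightarrow> p v \<in> B"
  unfolding pi0_def using maps_B by simp

lemma pi0_moved: "p v \<noteq> v \<Longrightarrow> v \<in> B \<and> v \<notin> set (gam \<pi> y) \<and> p v = \<pi> v \<and> nbr d n v (p v)"
  unfolding pi0_def using fixes_outside moves_to_nbr by (auto split: if_splits)

lemma pi0_on_gam: "v \<in> set (gam \<pi> y) \<Longrightarrow> p v = v"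
  unfolding pi0_def by simp

lemma pi0_off_gam:
  assumes "distinct (gam \<pi> y)" and v: "v \<notin> set (gam \<pi> y)"
  shows "p v \<notin> set (gam \<pi> y) \<and> p v = \<pi> v"
proof (cases "v \<in> B")
  case True
  then show ?thesis using no_entry_into_gam[OF assms(1) True v] v unfolding pi0_def by simp
next
  case False
  then show ?thesis using fixes_outside v unfolding pi0_def by simp
qed

lemma inj_pi0:
  assumes dist: "distinct (gam \<pi> y)"
  shows "inj p"
proof (rule injI)
  fix a b assume eq: "p a = p b"
  show "a = b"
  proof (cases "a \<in> set (gam \<pi> y) \<or> b \<in> set (gam \<pi> y)")
    case True
    have "a \<in> set (gam \<pi> y) \<and> b \<in> set (gam \<pi> y)"
    proof (rule ccontr)
      assume "\<not> (a \<in> set (gam \<pi> y) \<and> b \<in> set (gam \<pi> y))"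
      then show False
        using True eq pi0_on_gam[of a] pi0_on_gam[of b] pi0_off_gam[OF dist, of a]
          pi0_off_gam[OF dist, of b] by auto
    qed
    then show ?thesis using eq pi0_on_gam by simp
  next
    case False
    then have pi_eq: "\<pi> a = \<pi> b" and "a \<noteq> z" "b \<noteq> z"
      using eq pi0_off_gam[OF dist] z_in_gam by auto
    show ?thesis
    proof (cases "a \<in> B"; cases "b \<in> B")
      assume "a \<in> B" "b \<in> B"
      then show ?thesis using inj_onD_B[OF pi_eq] \<open>a \<noteq> z\<close> \<open>b \<noteq> z\<close> by simp
    next
      assume "a \<in> B" "b \<notin> B"
      then show ?thesis using pi_eq maps_B[of a] fixes_outside[of b] by simp
    next
      assume "a \<notin> B" "b \<in> B"
      then show ?thesis using pi_eq maps_B[of b] fixes_outside[of a] by simp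
    next
      assume "a \<notin> B" "b \<notin> B"
      then show ?thesis using pi_eq fixes_outside by simp
    qed
  qed
qed

lemma pi0_image_B:
  assumes "distinct (gam \<pi> y)"
  shows "p ` B = B"
  using endo_inj_surj[OF finite_B] pi0_maps_B inj_on_subset[OF inj_pi0[OF assms] subset_UNIV]
  by blast

lemma pi0_periodic:
  assumes dist: "distinct (gam \<pi> y)" and moved: "p c \<noteq> c"
  obtains m where "m > 0" "(p ^^ m) c = c"
proof -
  have cB: "c \<in> B" using pi0_moved[OF moved] by simp
  have "(p ^^ k) c \<in> B" for k by (induction k) (auto simp: cB pi0_maps_B)
  then have "{v. \<exists>k. v = (p ^^ k) c} \<subseteq> B" by auto
  then have "finite {v. \<exists>k. v = (p ^^ k) c}" using finite_B finite_subset by blast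
  then show ?thesis using funpow_inj_finite[OF inj_pi0[OF dist]] that by blast
qed

lemma inj_on_remove_cycle:
  assumes C: "C \<subseteq> B - {z}" and \<pi>C: "\<pi> ` C = C"
  shows "inj_on (remove_cycle C \<pi>) (B - {z})"
proof (rule inj_onI)
  have stays_out: "\<pi> v \<notin> C" if v: "v \<in> B - {z}" "v \<notin> C" for v
  proof
    assume "\<pi> v \<in> C"
    then obtain c where c: "c \<in> C" "\<pi> v = \<pi> c" using \<pi>C by (metis imageE)
    then have "v = c" using inj_on_B v C by (meson inj_on_contraD subsetD)
    then show False using v c by simp
  qed
  fix a b assume a: "a \<in> B - {z}" and b: "b \<in> B - {z}" and eq: "remove_cycle C \<pi> a = remove_cycle C \<pi> b"
  show "a = b"
  proof (cases "a \<in> C"; cases "b \<in> C")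
    assume "a \<notin> C" "b \<notin> C"
    then have "\<pi> a = \<pi> b" using eq unfolding remove_cycle_def by simp
    then show ?thesis using inj_on_B a b by (meson inj_on_contraD)
  qed (use eq stays_out a b in \<open>auto simp: remove_cycle_def\<close>)
qed

lemma image_remove_cycle:
  assumes C: "C \<subseteq> B - {z}" "C \<subseteq> B - {y}" and \<pi>C: "\<pi> ` C = C"
  shows "remove_cycle C \<pi> ` (B - {z}) = B - {y}"
proof -
  let ?r = "remove_cycle C \<pi>"
  have "?r ` (B - {z}) = ?r ` C \<union> ?r ` ((B - {z}) - C)" using C by blast
  also have "?r ` C = C" unfolding remove_cycle_def by auto
  also have "?r ` ((B - {z}) - C) = \<pi> ` ((B - {z}) - C)" unfolding remove_cycle_def by auto
  also have "\<dots> = \<pi> ` (B - {z}) - \<pi> ` C" using inj_on_B C by (intro inj_on_image_set_diff) auto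
  also have "\<dots> = (B - {y}) - C" using image_B \<pi>C by simp
  finally show ?thesis using C by blast
qed

lemma remove_cycle_in_Sfix:
  assumes C: "C \<subseteq> B - {z}" "C \<subseteq> B - {y}" and \<pi>C: "\<pi> ` C = C"
  shows "remove_cycle C \<pi> \<in> Sfix d n B y z"
  unfolding Sfix_def
proof (intro CollectI conjI allI impI ballI)
  show "u \<notin> B \<Longrightarrow> remove_cycle C \<pi> u = u" for u
    using fixes_outside C unfolding remove_cycle_def by auto
  show "remove_cycle C \<pi> z = z" using fixes_z unfolding remove_cycle_def by auto
  show "bij_betw (remove_cycle C \<pi>) (B - {z}) (B - {y})"
    using inj_on_remove_cycle image_remove_cycle assms by (simp add: bij_betw_def)
  show "u \<in> B \<Longrightarrow> remove_cycle C \<pi> u = u \<or> nbr d n u (remove_cycle C \<pi> u)" for u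
    using moves_to_nbr unfolding remove_cycle_def by auto
qed (rule z_in_B)

lemma gam_remove_cycle:
  assumes "C \<inter> set (gam \<pi> y) = {}"
  shows "gam (remove_cycle C \<pi>) y = gam \<pi> y"
proof -
  have iter_eq: "(remove_cycle C \<pi> ^^ j) y = (\<pi> ^^ j) y" for j
  proof (induction j)
    case (Suc j)
    have "(\<pi> ^^ j) y \<notin> C" using iter_in_gam assms by auto
    then show ?case using Suc unfolding remove_cycle_def by simp
  qed simp
  show ?thesis unfolding gam_def iter_eq ..
qed

end

section \<open>Regeneration and the Peierls bound\<close>

locale regen_setting =
  fixes d n :: nat and A :: "pt set" and y :: pt and g :: "pt list" and x :: pt
  assumes n_pos: "n \<ge> 1" and d_ge_2: "d \<ge> 2"
    and A_sub_Lam: "A \<subseteq> Lam d n" and A_weakly_adm: "weakly_adm d n y A"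
    and g_saw: "saw d n A y g" and x_on_g: "x \<in> set g"
    and x_far: "real_of_int (hd x - hd y) \<ge> ln (real n)"
begin

definition z_end where "z_end = last g"

lemma g_nonempty: "g \<noteq> []" and hd_g: "hd g = y" and distinct_g: "distinct g"
  and g_sub_A: "set g \<subseteq> A" and z_end_ell: "z_end \<in> ell d n n"
  and g_nbr: "Suc i < length g \<Longrightarrow> nbr d n (g ! i) (g ! Suc i)"
  using g_saw unfolding saw_def z_end_def by auto

lemma y_in_A: "y \<in> A" using g_nonempty hd_g g_sub_A by (metis hd_in_set subsetD)
lemma z_end_in_A: "z_end \<in> A" using g_nonempty g_sub_A unfolding z_end_def by (metis last_in_set subsetD)
lemma finite_A: "finite A" using A_sub_Lam finite_Lam finite_subset by blast
lemma x_in_Lam: "x \<in> Lam d n" using x_on_g g_sub_A A_sub_Lam by auto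
lemma d_pos: "d \<ge> 1" using d_ge_2 by simp
lemma g_nth_0: "g ! 0 = y" using g_nonempty hd_g by (simp add: hd_conv_nth)

definition Sg where "Sg = {\<pi> \<in> Sline d n A y. gam \<pi> y = g}"

lemma mem_Sg_iff: "\<pi> \<in> Sg \<longleftrightarrow> \<pi> \<in> Sfix d n A y z_end \<and> gam \<pi> y = g"
proof
  assume "\<pi> \<in> Sg"
  then obtain z where z: "z \<in> ell d n n" "\<pi> \<in> Sfix d n (A \<union> {z}) y z" and gam: "gam \<pi> y = g"
    unfolding Sg_def Sline_def by auto
  interpret Sfix_map d n "A \<union> {z}" y z \<pi>
    using z(2) finite_A y_in_A by unfold_locales auto
  have "z = z_end" using last_gam gam unfolding z_end_def by simp
  then show "\<pi> \<in> Sfix d n A y z_end \<and> gam \<pi> y = g" using z(2) z_end_in_A gam by (simp add: insert_absorb)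
next
  assume a: "\<pi> \<in> Sfix d n A y z_end \<and> gam \<pi> y = g"
  then have "\<pi> \<in> Sfix d n (A \<union> {z_end}) y z_end" using z_end_in_A by (simp add: insert_absorb)
  then show "\<pi> \<in> Sg" using a z_end_ell unfolding Sg_def Sline_def by auto
qed

lemma Sg_Sfix_map: "\<pi> \<in> Sg \<Longrightarrow> Sfix_map d n A y z_end \<pi>"
  using mem_Sg_iff finite_A y_in_A by unfold_locales auto

lemma gam_Sg: "\<pi> \<in> Sg \<Longrightarrow> gam \<pi> y = g"
  using mem_Sg_iff by auto

lemma distinct_gam_Sg: "\<pi> \<in> Sg \<Longrightarrow> distinct (gam \<pi> y)"
  using gam_Sg distinct_g by simp

lemma finite_Sg: "finite Sg"
proof -
  have "(\<lambda>\<pi>. restrict \<pi> A) ` Sg \<subseteq> (\<Pi>\<^sub>E i \<in> A. A)"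
    using Sfix_map.maps_B[OF Sg_Sfix_map] by auto
  moreover have "inj_on (\<lambda>\<pi>. restrict \<pi> A) Sg"
  proof (rule inj_onI)
    fix \<pi>1 \<pi>2 assume p1: "\<pi>1 \<in> Sg" and p2: "\<pi>2 \<in> Sg" and eq: "restrict \<pi>1 A = restrict \<pi>2 A"
    show "\<pi>1 = \<pi>2"
    proof
      fix u show "\<pi>1 u = \<pi>2 u"
        using eq Sfix_map.fixes_outside[OF Sg_Sfix_map[OF p1]] Sfix_map.fixes_outside[OF Sg_Sfix_map[OF p2]]
        by (cases "u \<in> A") (metis restrict_apply', simp)
    qed
  qed
  moreover have "finite (\<Pi>\<^sub>E i \<in> A. A)" using finite_A by (intro finite_PiE) auto
  ultimately show ?thesis by (metis finite_imageD finite_subset)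
qed

text \<open>A witness that the conditioning event is nonempty.\<close>

definition succ_map :: "pt \<Rightarrow> pt" where
  "succ_map v = (case map_of (zip (butlast g) (tl g)) v of None \<Rightarrow> v | Some w \<Rightarrow> w)"

lemma succ_map_nth: "Suc i < length g \<Longrightarrow> succ_map (g ! i) = g ! Suc i"
proof -
  assume i: "Suc i < length g"
  have "map_of (zip (butlast g) (tl g)) (butlast g ! i) = Some (tl g ! i)"
    using i by (intro map_of_zip_nth) (auto simp: distinct_butlast distinct_g)
  then show ?thesis using i unfolding succ_map_def by (simp add: nth_butlast nth_tl)
qed

lemma succ_map_off: "v \<notin> set (butlast g) \<Longrightarrow> succ_map v = v"
proof -
  assume "v \<notin> set (butlast g)"
  then have "map_of (zip (butlast g) (tl g)) v = None" by (simp add: map_of_zip_is_None)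
  then show ?thesis unfolding succ_map_def by (simp only: option.case)
qed

lemma set_g: "set g = insert z_end (set (butlast g))"
  and z_end_notin_butlast: "z_end \<notin> set (butlast g)"
proof -
  have g_split: "g = butlast g @ [z_end]" unfolding z_end_def using g_nonempty by simp
  show "set g = insert z_end (set (butlast g))" by (subst g_split) auto
  show "z_end \<notin> set (butlast g)" using distinct_g g_split by (metis distinct_append not_distinct_conv_prefix)
qed

lemma butlast_nth_index: "v \<in> set (butlast g) \<Longrightarrow> \<exists>i. Suc i < length g \<and> v = g ! i"
  by (metis in_set_conv_nth length_butlast less_diff_conv nth_butlast Suc_eq_plus1)

lemma inj_on_succ_map: "inj_on succ_map (A - {z_end})"
proof (rule inj_onI)
  fix a b assume a: "a \<in> A - {z_end}" and b: "b \<in> A - {z_end}" and eq: "succ_map a = succ_map b"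
  have on_g: "v \<in> set (butlast g) \<Longrightarrow> succ_map v \<in> set g" for v
    using butlast_nth_index succ_map_nth by fastforce
  show "a = b"
  proof (cases "a \<in> set (butlast g)"; cases "b \<in> set (butlast g)")
    assume "a \<in> set (butlast g)" "b \<in> set (butlast g)"
    then obtain i j where i: "Suc i < length g" "a = g ! i" and j: "Suc j < length g" "b = g ! j"
      using butlast_nth_index by blast
    then have "g ! Suc i = g ! Suc j" using eq succ_map_nth by simp
    then show ?thesis using distinct_g i j by (simp add: nth_eq_iff_index_eq)
  next
    assume "a \<in> set (butlast g)" "b \<notin> set (butlast g)"
    then show ?thesis using eq on_g b set_g succ_map_off by force
  next
    assume "a \<notin> set (butlast g)" "b \<in> set (butlast g)"
    then show ?thesis using eq on_g a set_g succ_map_off by force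
  next
    assume "a \<notin> set (butlast g)" "b \<notin> set (butlast g)"
    then show ?thesis using eq succ_map_off by simp
  qed
qed

lemma image_succ_map: "succ_map ` (A - {z_end}) = A - {y}"
proof
  show "succ_map ` (A - {z_end}) \<subseteq> A - {y}"
  proof
    fix w assume "w \<in> succ_map ` (A - {z_end})"
    then obtain a where a: "a \<in> A - {z_end}" "w = succ_map a" by auto
    show "w \<in> A - {y}"
    proof (cases "a \<in> set (butlast g)")
      case True
      then obtain i where i: "Suc i < length g" "a = g ! i" using butlast_nth_index by blast
      have "g ! Suc i \<noteq> g ! 0" using nth_eq_iff_index_eq[OF distinct_g, of "Suc i" 0] i g_nonempty by simp
      then show ?thesis using a i succ_map_nth g_nth_0 g_sub_A by (auto intro: nth_mem)
    next
      case False
      then have "a \<notin> set g" using a set_g by auto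
      then have "a \<noteq> y" using g_nonempty hd_g by auto
      then show ?thesis using a False succ_map_off by simp
    qed
  qed
next
  show "A - {y} \<subseteq> succ_map ` (A - {z_end})"
  proof
    fix w assume w: "w \<in> A - {y}"
    show "w \<in> succ_map ` (A - {z_end})"
    proof (cases "w \<in> set g")
      case True
      then obtain j where j: "j < length g" "w = g ! j" by (metis in_set_conv_nth)
      then obtain i where i: "j = Suc i" using w g_nth_0 by (cases j) auto
      have "g ! i \<in> set (butlast g)" using i j by (simp add: nth_butlast[symmetric])
      then have "g ! i \<in> A - {z_end}" using z_end_notin_butlast g_sub_A by (auto dest: in_set_butlastD)
      moreover have "succ_map (g ! i) = w" using succ_map_nth i j by simp
      ultimately show ?thesis by (metis imageI)
    next
      case False
      then have "w \<notin> set (butlast g)" "w \<noteq> z_end" using set_g by auto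
      then show ?thesis using w succ_map_off by (metis DiffD1 DiffI image_eqI singletonD)
    qed
  qed
qed

lemma succ_map_Sfix: "succ_map \<in> Sfix d n A y z_end"
  unfolding Sfix_def
proof (intro CollectI conjI allI impI ballI)
  show "u \<notin> A \<Longrightarrow> succ_map u = u" for u using g_sub_A set_g by (intro succ_map_off) auto
  show "z_end \<in> A" by (rule z_end_in_A)
  show "succ_map z_end = z_end" using z_end_notin_butlast succ_map_off by simp
  show "u \<in> A \<Longrightarrow> succ_map u = u \<or> nbr d n u (succ_map u)" for u
    using butlast_nth_index succ_map_nth g_nbr succ_map_off by metis
  show "bij_betw succ_map (A - {z_end}) (A - {y})"
    using inj_on_succ_map image_succ_map by (simp add: bij_betw_def)
qed

lemma iter_succ_map: "j < length g \<Longrightarrow> (succ_map ^^ j) y = g ! j"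
  by (induction j) (auto simp: g_nth_0 succ_map_nth)

lemma gam_succ_map: "gam succ_map y = g"
proof -
  define L where "L = length g - 1"
  have lg: "length g = Suc L" using g_nonempty unfolding L_def by simp
  have "(LEAST j. (succ_map ^^ Suc j) y = (succ_map ^^ j) y) = L"
  proof (rule Least_equality)
    have "(succ_map ^^ L) y = z_end"
      using iter_succ_map[of L] lg g_nonempty unfolding z_end_def by (simp add: last_conv_nth)
    then show "(succ_map ^^ Suc L) y = (succ_map ^^ L) y" using z_end_notin_butlast succ_map_off by simp
  next
    fix j assume eq: "(succ_map ^^ Suc j) y = (succ_map ^^ j) y"
    show "L \<le> j"
    proof (rule ccontr)
      assume "\<not> L \<le> j"
      then have j: "Suc j < length g" using lg by simp
      then have "g ! Suc j = g ! j" using eq iter_succ_map[of j] iter_succ_map[of "Suc j"] by simp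
      then show False using distinct_g j by (simp add: nth_eq_iff_index_eq)
    qed
  qed
  then have "gam succ_map y = map (\<lambda>j. (succ_map ^^ j) y) [0..<length g]" unfolding gam_def lg by simp
  also have "\<dots> = map (\<lambda>j. g ! j) [0..<length g]" using iter_succ_map by simp
  also have "\<dots> = g" by (simp add: map_nth)
  finally show ?thesis .
qed

lemma succ_map_in_Sg: "succ_map \<in> Sg"
  using mem_Sg_iff succ_map_Sfix gam_succ_map by simp

abbreviation mirror where "mirror \<equiv> refl_pt n x"

lemma mirror_in_Lam: "u \<in> Lam d n \<Longrightarrow> mirror u \<in> Lam d n"
  using refl_pt_in_Lam[OF n_pos d_pos x_in_Lam] by blast

lemma mirror_mirror: "u \<in> Lam d n \<Longrightarrow> mirror (mirror u) = u"
  using refl_pt_involution[OF n_pos d_pos x_in_Lam] by blast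

definition link :: "(pt \<Rightarrow> pt) \<Rightarrow> (pt \<times> pt) set" where
  "link q = {(a, b). a \<in> Lam d n \<and> b \<in> Lam d n \<and> (b = q a \<or> a = q b \<or> b = mirror a \<or> a = mirror b)}"

definition descends :: "(pt \<Rightarrow> pt) \<Rightarrow> pt \<Rightarrow> int \<Rightarrow> bool" where
  "descends q u k \<longleftrightarrow> (\<exists>t. (u, t) \<in> (link q)\<^sup>* \<and> hd t \<le> hd u - k)"

lemma link_in_Lam: "(a, b) \<in> link q \<Longrightarrow> a \<in> Lam d n \<and> b \<in> Lam d n"
  unfolding link_def by auto

lemma pi0_in_Lam:
  assumes "\<pi> \<in> Sg" and v: "v \<in> Lam d n"
  shows "pi0 \<pi> y v \<in> Lam d n"
proof -
  interpret Sfix_map d n A y z_end \<pi> using Sg_Sfix_map[OF assms(1)] .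
  show ?thesis using pi0_maps_B pi0_outside v A_sub_Lam by (cases "v \<in> A") auto
qed

lemma pi0_preimage_in_Lam:
  assumes "\<pi> \<in> Sg" and v: "v \<in> Lam d n"
  shows "\<exists>w \<in> Lam d n. pi0 \<pi> y w = v"
proof -
  interpret Sfix_map d n A y z_end \<pi> using Sg_Sfix_map[OF assms(1)] .
  show ?thesis
  proof (cases "v \<in> A")
    case True
    then show ?thesis using pi0_image_B[OF distinct_gam_Sg[OF assms(1)]] A_sub_Lam by force
  next
    case False
    then show ?thesis using v pi0_outside by blast
  qed
qed

lemma Cone_above: "u \<in> Cone d n x \<Longrightarrow> u \<in> Lam d n \<and> hd x \<le> hd u"
proof -
  have "ln (real n) \<ge> 0" using n_pos by simp
  then show "u \<in> Cone d n x \<Longrightarrow> u \<in> Lam d n \<and> hd x \<le> hd u"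
    using tdist_nonneg[OF n_pos, of "tl u" "tl x"] unfolding Cone_def by auto
qed

lemma above_x_in_A: "v \<in> Lam d n \<Longrightarrow> hd x \<le> hd v \<Longrightarrow> v \<in> A"
  using x_far A_weakly_adm unfolding weakly_adm_def by force

definition no_descent_region :: "(pt \<Rightarrow> pt) \<Rightarrow> pt set" where
  "no_descent_region q = {v \<in> Lam d n. \<forall>t. (v, t) \<in> (link q)\<^sup>* \<longrightarrow> hd x \<le> hd t}"

lemma no_descent_region_closed:
  assumes v: "v \<in> no_descent_region q" and vw: "(v, w) \<in> link q"
  shows "w \<in> no_descent_region q"
proof -
  have "\<forall>t. (w, t) \<in> (link q)\<^sup>* \<longrightarrow> hd x \<le> hd t"
  proof (intro allI impI)
    fix t assume "(w, t) \<in> (link q)\<^sup>*"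
    then have "(v, t) \<in> (link q)\<^sup>*" using vw by (rule converse_rtrancl_into_rtrancl[rotated])
    then show "hd x \<le> hd t" using v unfolding no_descent_region_def by blast
  qed
  then show ?thesis using link_in_Lam[OF vw] unfolding no_descent_region_def by simp
qed

lemma no_descent_region_Lam: "no_descent_region q \<subseteq> Lam d n"
  and no_descent_region_above: "u \<in> no_descent_region q \<Longrightarrow> hd x \<le> hd u"
  unfolding no_descent_region_def by blast+

lemma mirror_in_no_descent_region: "u \<in> no_descent_region q \<Longrightarrow> mirror u \<in> no_descent_region q"
  using no_descent_region_closed no_descent_region_Lam mirror_in_Lam unfolding link_def by blast

lemma pi0_image_no_descent_region:
  assumes \<pi>: "\<pi> \<in> Sg"
  shows "pi0 \<pi> y ` no_descent_region (pi0 \<pi> y) = no_descent_region (pi0 \<pi> y)"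
    (is "?p ` ?R = ?R")
proof
  show "?p ` ?R \<subseteq> ?R"
  proof
    fix w assume "w \<in> ?p ` ?R"
    then obtain u where u: "u \<in> ?R" "w = ?p u" by auto
    then have "(u, ?p u) \<in> link ?p" using no_descent_region_Lam pi0_in_Lam[OF \<pi>] unfolding link_def by auto
    then show "w \<in> ?R" using no_descent_region_closed u by blast
  qed
  show "?R \<subseteq> ?p ` ?R"
  proof
    fix u assume u: "u \<in> ?R"
    obtain w where w: "w \<in> Lam d n" "?p w = u" using pi0_preimage_in_Lam[OF \<pi>] u no_descent_region_Lam by blast
    then have "(u, w) \<in> link ?p" using u no_descent_region_Lam unfolding link_def by auto
    then have "w \<in> ?R" using no_descent_region_closed u by blast
    then show "u \<in> ?p ` ?R" using w by auto
  qed
qed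

lemma regen_if_no_descent:
  assumes \<pi>: "\<pi> \<in> Sg" and pre: "prereg d n g x"
    and no_descent: "\<forall>u\<in>Cone d n x. \<not> descends (pi0 \<pi> y) u (hd u - hd x + 1)"
  shows "regen d n A y \<pi> x"
proof -
  let ?R = "no_descent_region (pi0 \<pi> y)"
  have "Cone d n x \<subseteq> ?R"
  proof
    fix u assume u: "u \<in> Cone d n x"
    have "\<forall>t. (u, t) \<in> (link (pi0 \<pi> y))\<^sup>* \<longrightarrow> hd x \<le> hd t"
      using no_descent u unfolding descends_def by force
    then show "u \<in> ?R" using Cone_above[OF u] unfolding no_descent_region_def by simp
  qed
  then have "strictly_adm d n x ?R"
    unfolding strictly_adm_def adm_def weakly_adm_def Cone_def by (auto simp: tdist_self)
  moreover have "?R \<subseteq> A" using above_x_in_A no_descent_region_Lam no_descent_region_above by blast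
  moreover have "prereg d n (gam \<pi> y) x" using pre gam_Sg[OF \<pi>] by simp
  ultimately show ?thesis
    unfolding regen_def using no_descent_region_above mirror_in_no_descent_region
      pi0_image_no_descent_region[OF \<pi>] by blast
qed

definition fixing where "fixing F = {\<pi> \<in> Sg. \<forall>v\<in>F. \<pi> v = v}"

definition mass where "mass \<alpha> F = (\<Sum>\<pi>\<in>fixing F. wt \<alpha> \<pi>)"

definition descent_mass where
  "descent_mass \<alpha> F u k = (\<Sum>\<pi>\<in>{\<pi>\<in>fixing F. descends (pi0 \<pi> y) u k}. wt \<alpha> \<pi>)"

lemma finite_fixing: "finite (fixing F)"
  using finite_Sg unfolding fixing_def by auto

lemma mass_nonneg: "mass \<alpha> F \<ge> 0"
  unfolding mass_def using wt_nonneg by (simp add: sum_nonneg)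

lemma descent_mass_nonneg: "descent_mass \<alpha> F u k \<ge> 0"
  unfolding descent_mass_def using wt_nonneg by (simp add: sum_nonneg)

lemma descent_mass_le_mass: "descent_mass \<alpha> F u k \<le> mass \<alpha> F"
  unfolding descent_mass_def mass_def using finite_fixing wt_nonneg by (intro sum_mono2) auto

lemma mass_antimono: "mass \<alpha> (F \<union> G) \<le> mass \<alpha> F"
  unfolding mass_def using finite_fixing wt_nonneg by (intro sum_mono2) (auto simp: fixing_def)

lemma link_remove_cycle:
  assumes "(w, w') \<in> link q" and "w' \<notin> C" and "q ` C \<subseteq> C"
  shows "(w, w') \<in> link (remove_cycle C q)"
  using assms unfolding link_def remove_cycle_def by auto

text \<open>Once a link path from C \<union> mirror ` C has left that set, it no longer uses the
q-invariant set C, so it is also a path for the map with C removed.\<close>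

lemma link_path_split:
  assumes inv: "q ` C \<subseteq> C" and path: "(a, t) \<in> (link q)\<^sup>*" and a: "a \<in> C \<union> mirror ` C"
  shows "t \<in> C \<union> mirror ` C \<or> (\<exists>v \<in> C \<union> mirror ` C. (v, t) \<in> (link (remove_cycle C q))\<^sup>*)"
  using path
proof (induction rule: rtrancl_induct)
  case (step w w')
  show ?case
  proof (cases "w' \<in> C \<union> mirror ` C")
    case False
    then have "(w, w') \<in> link (remove_cycle C q)" using link_remove_cycle[OF step.hyps(2) _ inv] by simp
    then show ?thesis using step.IH by (meson rtrancl.rtrancl_into_rtrancl r_into_rtrancl)
  qed simp
qed (use a in simp)

lemma link_closure_of_fixed_pair:
  assumes inj: "inj q" and u: "u \<in> Lam d n" and f1: "q u = u" and f2: "q (mirror u) = mirror u"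
    and path: "(u, t) \<in> (link q)\<^sup>*"
  shows "t \<in> {u, mirror u}"
  using path
proof (induction rule: rtrancl_induct)
  case base then show ?case by simp
next
  case (step w w')
  have w'L: "w' \<in> Lam d n" using link_in_Lam[OF step.hyps(2)] by auto
  have s: "w' = q w \<or> w = q w' \<or> w' = mirror w \<or> w = mirror w'" using step.hyps(2) unfolding link_def by auto
  have qw: "q w = w" using step.IH f1 f2 by auto
  have rr: "mirror (mirror u) = u" using mirror_mirror[OF u] .
  show ?case
  proof -
    { assume "w' = q w" then have ?case using qw step.IH by simp }
    moreover { assume "w = q w'" then have "q w' = q w" using qw by simp
      then have "w' = w" using inj by (simp add: inj_eq)
      then have ?case using step.IH by simp }
    moreover { assume "w' = mirror w" then have ?case using step.IH rr by auto }
    moreover { assume "w = mirror w'" then have "w' = mirror w" using mirror_mirror[OF w'L] by simp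
      then have ?case using step.IH rr by auto }
    ultimately show ?case using s by blast
  qed
qed

lemma remove_cycle_in_Sg:
  assumes \<pi>: "\<pi> \<in> Sg" and C_A: "C \<subseteq> A" and C_g: "C \<inter> set g = {}" and \<pi>C: "\<pi> ` C = C"
  shows "remove_cycle C \<pi> \<in> Sg"
proof -
  interpret Sfix_map d n A y z_end \<pi> using Sg_Sfix_map[OF \<pi>] .
  have "z_end \<in> set g" using g_nonempty unfolding z_end_def by simp
  moreover have "y \<in> set g" using g_nonempty hd_g by (metis hd_in_set)
  ultimately have "C \<subseteq> A - {z_end}" "C \<subseteq> A - {y}" using C_A C_g by auto
  then show ?thesis
    using remove_cycle_in_Sfix \<pi>C gam_remove_cycle C_g gam_Sg[OF \<pi>] mem_Sg_iff by simp
qed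

lemma pi0_remove_cycle:
  assumes \<pi>: "\<pi> \<in> Sg" and "C \<subseteq> A" and C_g: "C \<inter> set g = {}" and "\<pi> ` C = C"
  shows "pi0 (remove_cycle C \<pi>) y = remove_cycle C (pi0 \<pi> y)"
  using gam_Sg[OF remove_cycle_in_Sg[OF assms]] gam_Sg[OF \<pi>] C_g
  unfolding pi0_def remove_cycle_def by (intro ext) auto

lemma wt_remove_cycle:
  assumes \<pi>: "\<pi> \<in> Sg" and C_A: "C \<subseteq> A" and moved: "\<forall>v\<in>C. \<pi> v \<noteq> v"
  shows "wt \<alpha> \<pi> = exp (- \<alpha> * real (card C)) * wt \<alpha> (remove_cycle C \<pi>)"
proof -
  interpret Sfix_map d n A y z_end \<pi> using Sg_Sfix_map[OF \<pi>] .
  let ?M = "{u. \<pi> u \<noteq> u}" and ?M' = "{u. remove_cycle C \<pi> u \<noteq> u}"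
  have "finite ?M" using fixes_outside finite_A finite_subset[of ?M A] by blast
  moreover have split: "?M = ?M' \<union> C" "?M' \<inter> C = {}"
    using moved unfolding remove_cycle_def by auto
  moreover have "finite C" using C_A finite_A finite_subset by blast
  ultimately have "card ?M = card ?M' + card C" by (simp add: card_Un_disjoint)
  then show ?thesis unfolding wt_def by (simp add: algebra_simps exp_add[symmetric])
qed

lemma cycle_of_pi0:
  assumes \<pi>: "\<pi> \<in> Sg" and moved: "pi0 \<pi> y c \<noteq> c"
  defines "cs \<equiv> cycle_list (pi0 \<pi> y) c"
  shows "cs \<noteq> [] \<and> cs ! 0 = c \<and> distinct cs \<and> set cs \<subseteq> A \<and> set cs \<inter> set g = {} \<and>
         \<pi> ` set cs = set cs \<and> (\<forall>v\<in>set cs. \<pi> v \<noteq> v) \<and> set cs \<subseteq> Lam d n \<and>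
         (\<forall>i < length cs. \<pi> (cs ! i) = cs ! ((i + 1) mod length cs)) \<and>
         (\<forall>i. Suc i < length cs \<longrightarrow> nbr d n (cs ! i) (cs ! Suc i)) \<and>
         pi0 \<pi> y ` set cs \<subseteq> set cs"
proof -
  interpret Sfix_map d n A y z_end \<pi> using Sg_Sfix_map[OF \<pi>] .
  interpret cyc: periodic_point p c
    using pi0_periodic[OF distinct_gam_Sg[OF \<pi>] moved] moved by unfold_locales blast
  have len: "length cs = cyc.period" and dist: "distinct cs" and image: "p ` set cs = set cs"
    and step: "\<And>i. i < length cs \<Longrightarrow> p (cs ! i) = cs ! ((i + 1) mod length cs)"
    using cyc.length_cycle_list cyc.distinct_cycle_list cyc.image_cycle_list cyc.cycle_list_step
    unfolding cs_def by auto
  have first: "cs \<noteq> [] \<and> cs ! 0 = c" using len cyc.period_pos cyc.nth_cycle_list[of 0] unfolding cs_def by auto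
  have mv: "v \<in> A \<and> v \<notin> set g \<and> p v = \<pi> v \<and> nbr d n v (p v)" if "v \<in> set cs" for v
    using pi0_moved cyc.cycle_list_moved that gam_Sg[OF \<pi>] unfolding cs_def by metis
  have "\<pi> ` set cs = set cs" using image mv by (metis (no_types, lifting) image_cong)
  moreover have "\<forall>i < length cs. \<pi> (cs ! i) = cs ! ((i + 1) mod length cs)"
    using step mv by (metis nth_mem)
  moreover have "\<forall>i. Suc i < length cs \<longrightarrow> nbr d n (cs ! i) (cs ! Suc i)"
    using step mv by (metis Suc_eq_plus1 Suc_lessD mod_less nth_mem)
  moreover have "set cs \<subseteq> A" "set cs \<inter> set g = {}" "\<forall>v\<in>set cs. \<pi> v \<noteq> v"
    using mv cyc.cycle_list_moved unfolding cs_def by auto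
  ultimately show ?thesis using first dist image A_sub_Lam by blast
qed

definition walks_at where
  "walks_at u = {cs. cs \<noteq> [] \<and> distinct cs \<and> set cs \<subseteq> Lam d n \<and> cs ! 0 \<in> {u, mirror u} \<and>
              (\<forall>i. Suc i < length cs \<longrightarrow> nbr d n (cs ! i) (cs ! Suc i))}"

lemma length_walks_at: "cs \<in> walks_at u \<Longrightarrow> length cs \<in> {1..card (Lam d n)}"
proof -
  assume "cs \<in> walks_at u"
  then have cs: "set cs \<subseteq> Lam d n" "distinct cs" "cs \<noteq> []" unfolding walks_at_def by auto
  have "length cs = card (set cs)" using distinct_card[OF cs(2)] by simp
  also have "\<dots> \<le> card (Lam d n)" using card_mono[OF finite_Lam cs(1)] .
  finally show ?thesis using cs(3) by (simp add: Suc_leI)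
qed

lemma finite_walks_at: "finite (walks_at u)"
proof -
  have "walks_at u \<subseteq> {xs. set xs \<subseteq> Lam d n \<and> length xs \<le> card (Lam d n)}"
    using length_walks_at unfolding walks_at_def by fastforce
  then show ?thesis using finite_lists_length_le[OF finite_Lam] finite_subset by blast
qed

text \<open>Starting from mirror u when u is fixed makes the cycle nontrivial whenever a
link path from u descends at all.\<close>

definition cycle_at where
  "cycle_at \<pi> u = cycle_list (pi0 \<pi> y) (if pi0 \<pi> y u \<noteq> u then u else mirror u)"

definition cycle_class where
  "cycle_class F k cs = {\<pi> \<in> fixing F. (\<forall>i<length cs. \<pi> (cs ! i) = cs ! ((i + 1) mod length cs)) \<and>
      set cs \<subseteq> A \<and> set cs \<inter> set g = {} \<and> \<pi> ` set cs = set cs \<and> (\<forall>v\<in>set cs. \<pi> v \<noteq> v) \<and>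
      (k < int (length cs) \<or>
       (\<exists>v\<in>set cs \<union> mirror ` set cs. descends (pi0 (remove_cycle (set cs) \<pi>) y) v (k - int (length cs))))}"

lemma walks_at_hd_lower:
  assumes cs: "cs \<in> walks_at u" and w: "w \<in> set cs \<union> mirror ` set cs"
  shows "hd u - int (length cs) + 1 \<le> hd w"
proof -
  obtain v where "v \<in> set cs" "hd w = hd v" using w refl_pt_hd by auto
  then obtain i where "i < length cs" "hd w = hd (cs ! i)" by (metis in_set_conv_nth)
  moreover have "hd (cs ! 0) = hd u" using cs unfolding walks_at_def by (auto simp: refl_pt_hd)
  ultimately show ?thesis using nbr_walk_hd_lower[of cs d n] cs unfolding walks_at_def by force
qed

lemma descends_moves_point:
  assumes \<pi>: "\<pi> \<in> Sg" and u: "u \<in> Lam d n" and k: "k \<ge> 1" and desc: "descends (pi0 \<pi> y) u k"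
  shows "pi0 \<pi> y u \<noteq> u \<or> pi0 \<pi> y (mirror u) \<noteq> mirror u"
proof (rule ccontr)
  assume "\<not> ?thesis"
  moreover have "inj (pi0 \<pi> y)" using Sfix_map.inj_pi0[OF Sg_Sfix_map[OF \<pi>] distinct_gam_Sg[OF \<pi>]] .
  moreover obtain t where t: "(u, t) \<in> (link (pi0 \<pi> y))\<^sup>*" "hd t \<le> hd u - k"
    using desc unfolding descends_def by auto
  ultimately have "t \<in> {u, mirror u}" using link_closure_of_fixed_pair[OF _ u] by blast
  then show False using t(2) k by (auto simp: refl_pt_hd)
qed

lemma cycle_at_descending:
  assumes u: "u \<in> Lam d n" and k: "k \<ge> 1"
    and \<pi>F: "\<pi> \<in> fixing F" and desc: "descends (pi0 \<pi> y) u k"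
  shows "cycle_at \<pi> u \<in> walks_at u \<and> \<pi> \<in> cycle_class F k (cycle_at \<pi> u)"
proof -
  let ?p = "pi0 \<pi> y" and ?cs = "cycle_at \<pi> u"
  define c where "c = (if ?p u \<noteq> u then u else mirror u)"
  let ?C = "set ?cs" and ?m = "length ?cs"
  let ?D = "?C \<union> mirror ` ?C"
  have \<pi>: "\<pi> \<in> Sg" using \<pi>F unfolding fixing_def by simp
  have "?p c \<noteq> c" using descends_moves_point[OF \<pi> u k desc] unfolding c_def by auto
  from cycle_of_pi0[OF \<pi> this] have cyc: "?cs \<noteq> [] \<and> ?cs ! 0 = c \<and> distinct ?cs \<and> ?C \<subseteq> A \<and> ?C \<inter> set g = {} \<and>
         \<pi> ` ?C = ?C \<and> (\<forall>v\<in>?C. \<pi> v \<noteq> v) \<and> ?C \<subseteq> Lam d n \<and>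
         (\<forall>i < ?m. \<pi> (?cs ! i) = ?cs ! ((i + 1) mod ?m)) \<and>
         (\<forall>i. Suc i < ?m \<longrightarrow> nbr d n (?cs ! i) (?cs ! Suc i)) \<and> ?p ` ?C \<subseteq> ?C"
    unfolding cycle_at_def c_def .
  have in_walks: "?cs \<in> walks_at u" using cyc unfolding walks_at_def c_def by auto
  obtain t where t: "(u, t) \<in> (link ?p)\<^sup>*" "hd t \<le> hd u - k" using desc unfolding descends_def by auto
  have "(c, t) \<in> (link ?p)\<^sup>*"
  proof (cases "c = u")
    case False
    then have "(c, u) \<in> link ?p" using u mirror_in_Lam[OF u] unfolding c_def link_def by (auto split: if_splits)
    then show ?thesis using t by (meson converse_rtrancl_into_rtrancl)
  qed (use t in simp)
  then have "t \<in> ?D \<or> (\<exists>v\<in>?D. (v, t) \<in> (link (remove_cycle ?C ?p))\<^sup>*)"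
    using link_path_split cyc by (metis UnI1 nth_mem length_greater_0_conv)
  then have "k < int ?m \<or> (\<exists>v\<in>?D. descends (pi0 (remove_cycle ?C \<pi>) y) v (k - int ?m))"
  proof
    assume "t \<in> ?D"
    then have "hd u - int ?m + 1 \<le> hd t" by (rule walks_at_hd_lower[OF in_walks])
    then show ?thesis using t(2) by linarith
  next
    assume "\<exists>v\<in>?D. (v, t) \<in> (link (remove_cycle ?C ?p))\<^sup>*"
    then obtain v where v: "v \<in> ?D" "(v, t) \<in> (link (remove_cycle ?C ?p))\<^sup>*" by blast
    have "hd t \<le> hd v - (k - int ?m)" using walks_at_hd_lower[OF in_walks v(1)] t(2) by linarith
    then show ?thesis using v pi0_remove_cycle[OF \<pi>] cyc unfolding descends_def by metis
  qed
  then show ?thesis using \<pi>F cyc in_walks unfolding cycle_class_def by blast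
qed

lemma finite_cycle_class: "finite (cycle_class F k cs)"
  using finite_fixing[of F] unfolding cycle_class_def by simp

lemma inj_on_remove_cycle_class: "inj_on (remove_cycle (set cs)) (cycle_class F k cs)"
proof (rule inj_onI)
  fix \<pi>1 \<pi>2
  assume \<pi>1: "\<pi>1 \<in> cycle_class F k cs" and \<pi>2: "\<pi>2 \<in> cycle_class F k cs"
    and eq: "remove_cycle (set cs) \<pi>1 = remove_cycle (set cs) \<pi>2"
  show "\<pi>1 = \<pi>2"
  proof
    fix v show "\<pi>1 v = \<pi>2 v"
    proof (cases "v \<in> set cs")
      case True
      then obtain i where "i < length cs" "v = cs ! i" by (metis in_set_conv_nth)
      then show ?thesis using \<pi>1 \<pi>2 unfolding cycle_class_def by auto
    next
      case False
      then show ?thesis using eq unfolding remove_cycle_def by (metis (full_types))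
    qed
  qed
qed

lemma remove_cycle_class_subset:
  "remove_cycle (set cs) ` cycle_class F k cs \<subseteq>
     {\<sigma> \<in> fixing (F \<union> set cs). k < int (length cs) \<or>
        (\<exists>v\<in>set cs \<union> mirror ` set cs. descends (pi0 \<sigma> y) v (k - int (length cs)))}"
proof
  fix \<sigma> assume "\<sigma> \<in> remove_cycle (set cs) ` cycle_class F k cs"
  then obtain \<pi> where \<pi>: "\<pi> \<in> cycle_class F k cs" and \<sigma>: "\<sigma> = remove_cycle (set cs) \<pi>" by blast
  have \<pi>F: "\<pi> \<in> Sg" "\<forall>v\<in>F. \<pi> v = v" using \<pi> unfolding cycle_class_def fixing_def by auto
  have "\<sigma> \<in> Sg" using \<pi> \<pi>F(1) unfolding \<sigma> cycle_class_def by (intro remove_cycle_in_Sg) auto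
  moreover have "\<forall>v\<in>F \<union> set cs. \<sigma> v = v" using \<pi>F(2) unfolding \<sigma> remove_cycle_def by auto
  moreover have "k < int (length cs) \<or>
      (\<exists>v\<in>set cs \<union> mirror ` set cs. descends (pi0 \<sigma> y) v (k - int (length cs)))"
    using \<pi> unfolding \<sigma> cycle_class_def by blast
  ultimately show "\<sigma> \<in> {\<sigma> \<in> fixing (F \<union> set cs). k < int (length cs) \<or>
      (\<exists>v\<in>set cs \<union> mirror ` set cs. descends (pi0 \<sigma> y) v (k - int (length cs)))}"
    unfolding fixing_def by blast
qed

text \<open>Removing the cycle costs exactly the factor exp(-alpha |cs|), and the
remaining configuration either is unconstrained (if the cycle alone already spans k
levels) or must descend the remaining k - |cs| levels from the cycle or its mirror.\<close>

lemma mass_cycle_class_le: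
  assumes cs: "cs \<in> walks_at u"
  shows "sum (wt \<alpha>) (cycle_class F k cs) \<le> exp (- \<alpha> * real (length cs)) *
           ((if k < int (length cs) then mass \<alpha> (F \<union> set cs) else 0) +
            (\<Sum>v\<in>set cs \<union> mirror ` set cs. descent_mass \<alpha> (F \<union> set cs) v (k - int (length cs))))"
    (is "_ \<le> _ * ?bound")
proof -
  let ?C = "set cs" and ?m = "length cs" and ?r = "remove_cycle (set cs)"
  let ?Y = "cycle_class F k cs"
  have Y_Sg: "?Y \<subseteq> Sg" unfolding cycle_class_def fixing_def by auto
  have card_C: "card ?C = ?m" using cs distinct_card unfolding walks_at_def by blast
  have "sum (wt \<alpha>) ?Y = (\<Sum>\<pi>\<in>?Y. exp (- \<alpha> * real ?m) * wt \<alpha> (?r \<pi>))"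
    using wt_remove_cycle Y_Sg card_C unfolding cycle_class_def by (intro sum.cong) auto
  also have "\<dots> = exp (- \<alpha> * real ?m) * (\<Sum>\<pi>\<in>?Y. wt \<alpha> (?r \<pi>))"
    by (simp add: sum_distrib_left)
  also have "(\<Sum>\<pi>\<in>?Y. wt \<alpha> (?r \<pi>)) = sum (wt \<alpha>) (?r ` ?Y)"
    using sum.reindex[OF inj_on_remove_cycle_class, of "wt \<alpha>"] by simp
  also have "sum (wt \<alpha>) (?r ` ?Y) \<le> ?bound"
  proof (cases "k < int ?m")
    case True
    have "?r ` ?Y \<subseteq> fixing (F \<union> ?C)" using remove_cycle_class_subset by blast
    then have "sum (wt \<alpha>) (?r ` ?Y) \<le> mass \<alpha> (F \<union> ?C)"
      unfolding mass_def using finite_fixing wt_nonneg by (intro sum_mono2) auto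
    moreover have "0 \<le> (\<Sum>v\<in>?C \<union> mirror ` ?C. descent_mass \<alpha> (F \<union> ?C) v (k - int ?m))"
      using descent_mass_nonneg by (simp add: sum_nonneg)
    ultimately show ?thesis using True by simp
  next
    case False
    have "sum (wt \<alpha>) (?r ` ?Y)
        \<le> (\<Sum>v\<in>?C \<union> mirror ` ?C. sum (wt \<alpha>) {\<sigma>\<in>fixing (F \<union> ?C). descends (pi0 \<sigma> y) v (k - int ?m)})"
    proof (rule sum_le_sum_over_cover)
      show "\<forall>s\<in>?r ` ?Y. \<exists>v\<in>?C \<union> mirror ` ?C. s \<in> {\<sigma>\<in>fixing (F \<union> ?C). descends (pi0 \<sigma> y) v (k - int ?m)}"
        using remove_cycle_class_subset[of cs F k] False by blast
    qed (use finite_cycle_class finite_fixing wt_nonneg in auto)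
    then show ?thesis using False unfolding descent_mass_def by simp
  qed
  finally show ?thesis by (simp add: mult_left_mono)
qed

lemma descent_mass_decomposition:
  assumes u: "u \<in> Lam d n" and k: "k \<ge> 1"
  shows "descent_mass \<alpha> F u k \<le> (\<Sum>cs\<in>walks_at u. exp (- \<alpha> * real (length cs)) *
            ((if k < int (length cs) then mass \<alpha> (F \<union> set cs) else 0) +
             (\<Sum>v\<in>set cs \<union> mirror ` set cs. descent_mass \<alpha> (F \<union> set cs) v (k - int (length cs)))))"
    (is "_ \<le> ?rhs")
proof -
  let ?X = "{\<pi>\<in>fixing F. descends (pi0 \<pi> y) u k}"
  have "descent_mass \<alpha> F u k = (\<Sum>cs\<in>walks_at u. sum (wt \<alpha>) {\<pi> \<in> ?X. cycle_at \<pi> u = cs})"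
    unfolding descent_mass_def using cycle_at_descending[OF u k] finite_fixing
    by (intro sum.group[symmetric] finite_walks_at) auto
  also have "\<dots> \<le> (\<Sum>cs\<in>walks_at u. sum (wt \<alpha>) (cycle_class F k cs))"
  proof (rule sum_mono)
    fix cs
    have "{\<pi> \<in> ?X. cycle_at \<pi> u = cs} \<subseteq> cycle_class F k cs"
      using cycle_at_descending[OF u k] by blast
    then show "sum (wt \<alpha>) {\<pi> \<in> ?X. cycle_at \<pi> u = cs} \<le> sum (wt \<alpha>) (cycle_class F k cs)"
      using finite_cycle_class wt_nonneg by (intro sum_mono2) auto
  qed
  also have "\<dots> \<le> ?rhs" by (rule sum_mono) (rule mass_cycle_class_le)
  finally show ?thesis .
qed

lemma card_walk_and_mirror: "card (set cs \<union> mirror ` set cs) \<le> 2 * length cs"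
proof -
  have "card (set cs \<union> mirror ` set cs) \<le> card (set cs) + card (mirror ` set cs)" by (rule card_Un_le)
  also have "card (mirror ` set cs) \<le> card (set cs)" by (rule card_image_le) simp
  finally show ?thesis using card_length[of cs] by linarith
qed

lemma cycle_term_le:
  assumes \<rho>: "0 < \<rho>" "\<rho> \<le> 1" and k: "k \<ge> 1" and cs: "cs \<in> walks_at u"
    and rest: "\<And>G v. v \<in> Lam d n \<Longrightarrow>
       descent_mass \<alpha> G v (k - int (length cs)) \<le> decay \<rho> (k - int (length cs)) * mass \<alpha> G"
  shows "exp (- \<alpha> * real (length cs)) *
            ((if k < int (length cs) then mass \<alpha> (F \<union> set cs) else 0) +
             (\<Sum>v\<in>set cs \<union> mirror ` set cs. descent_mass \<alpha> (F \<union> set cs) v (k - int (length cs))))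
         \<le> decay \<rho> k * mass \<alpha> F * (exp (- \<alpha> * real (length cs)) * (2 * real (length cs) + 1) / \<rho> ^ length cs)"
proof -
  let ?m = "length cs" and ?C = "set cs"
  let ?D = "?C \<union> mirror ` ?C" and ?r = "decay \<rho> (k - int (length cs))"
  have r_nonneg: "?r \<ge> 0" using decay_nonneg \<rho> by simp
  have D_Lam: "?D \<subseteq> Lam d n" using cs mirror_in_Lam unfolding walks_at_def by auto
  have "descent_mass \<alpha> (F \<union> ?C) v (k - int ?m) \<le> ?r * mass \<alpha> F" if "v \<in> ?D" for v
    using rest[of v "F \<union> ?C"] that D_Lam mass_antimono[of \<alpha> F ?C] r_nonneg
    by (meson mult_left_mono order_trans subsetD)
  then have "(\<Sum>v\<in>?D. descent_mass \<alpha> (F \<union> ?C) v (k - int ?m)) \<le> real (card ?D) * (?r * mass \<alpha> F)"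
    by (rule sum_bounded_above)
  also have "\<dots> \<le> 2 * real ?m * (?r * mass \<alpha> F)"
    using card_walk_and_mirror[of cs] r_nonneg mass_nonneg by (intro mult_right_mono) auto
  finally have sum_le: "(\<Sum>v\<in>?D. descent_mass \<alpha> (F \<union> ?C) v (k - int ?m)) \<le> 2 * real ?m * (?r * mass \<alpha> F)" .
  have first_le: "(if k < int ?m then mass \<alpha> (F \<union> ?C) else 0) \<le> ?r * mass \<alpha> F"
    using mass_antimono[of \<alpha> F ?C] r_nonneg mass_nonneg unfolding decay_def by auto
  have "(if k < int ?m then mass \<alpha> (F \<union> ?C) else 0) + (\<Sum>v\<in>?D. descent_mass \<alpha> (F \<union> ?C) v (k - int ?m))
        \<le> (2 * real ?m + 1) * (?r * mass \<alpha> F)"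
    using first_le sum_le by (simp add: algebra_simps)
  also have "\<dots> \<le> (2 * real ?m + 1) * (decay \<rho> k / \<rho> ^ ?m * mass \<alpha> F)"
    using decay_shift[OF \<rho> k, of ?m] mass_nonneg by (intro mult_left_mono mult_right_mono) auto
  finally have "exp (- \<alpha> * real ?m) * ((if k < int ?m then mass \<alpha> (F \<union> ?C) else 0) +
      (\<Sum>v\<in>?D. descent_mass \<alpha> (F \<union> ?C) v (k - int ?m)))
      \<le> exp (- \<alpha> * real ?m) * ((2 * real ?m + 1) * (decay \<rho> k / \<rho> ^ ?m * mass \<alpha> F))"
    by (rule mult_left_mono) simp
  also have "\<dots> = decay \<rho> k * mass \<alpha> F * (exp (- \<alpha> * real ?m) * (2 * real ?m + 1) / \<rho> ^ ?m)"
    by (simp add: divide_inverse mult_ac)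
  finally show ?thesis .
qed

lemma descent_mass_le_decay:
  assumes \<rho>: "0 < \<rho>" "\<rho> \<le> 1"
    and walk_sum: "\<And>u. (\<Sum>cs\<in>walks_at u. exp (- \<alpha> * real (length cs)) * (2 * real (length cs) + 1) / \<rho> ^ length cs) \<le> 1"
  shows "u \<in> Lam d n \<Longrightarrow> descent_mass \<alpha> F u k \<le> decay \<rho> k * mass \<alpha> F"
proof (induction "nat k" arbitrary: k F u rule: less_induct)
  case less
  show ?case
  proof (cases "k \<le> 0")
    case True then show ?thesis using descent_mass_le_mass unfolding decay_def by simp
  next
    case False
    then have k: "k \<ge> 1" by simp
    have rest: "descent_mass \<alpha> G v (k - int (length cs)) \<le> decay \<rho> (k - int (length cs)) * mass \<alpha> G"
      if "cs \<in> walks_at u" "v \<in> Lam d n" for cs G v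
    proof (cases "k - int (length cs) \<le> 0")
      case True then show ?thesis using descent_mass_le_mass unfolding decay_def by simp
    next
      case False
      have "length cs \<ge> 1" using that(1) length_walks_at by simp
      then have "nat (k - int (length cs)) < nat k" using False by linarith
      then show ?thesis using less.hyps that(2) by blast
    qed
    have "descent_mass \<alpha> F u k \<le> (\<Sum>cs\<in>walks_at u. decay \<rho> k * mass \<alpha> F *
        (exp (- \<alpha> * real (length cs)) * (2 * real (length cs) + 1) / \<rho> ^ length cs))"
      using descent_mass_decomposition[OF less.prems k] cycle_term_le[OF \<rho> k _ rest]
      by (meson order_trans sum_mono)
    also have "\<dots> = decay \<rho> k * mass \<alpha> F * (\<Sum>cs\<in>walks_at u.
        exp (- \<alpha> * real (length cs)) * (2 * real (length cs) + 1) / \<rho> ^ length cs)"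
      by (simp add: sum_distrib_left)
    also have "\<dots> \<le> decay \<rho> k * mass \<alpha> F"
      using walk_sum[of u] decay_nonneg[OF \<rho>(1)] mass_nonneg
      by (intro mult_left_le) auto
    finally show ?thesis .
  qed
qed

lemma card_walks_at_length: "card {cs \<in> walks_at u. length cs = Suc j} \<le> 2 * (3 ^ d) ^ j"
proof -
  have "{cs \<in> walks_at u. length cs = Suc j} \<subseteq> nbr_walks d n u j \<union> nbr_walks d n (mirror u) j"
    unfolding walks_at_def nbr_walks_def by auto
  then have "card {cs \<in> walks_at u. length cs = Suc j} \<le> card (nbr_walks d n u j \<union> nbr_walks d n (mirror u) j)"
    using finite_card_nbr_walks[OF n_pos d_pos] by (intro card_mono) auto
  also have "\<dots> \<le> card (nbr_walks d n u j) + card (nbr_walks d n (mirror u) j)" by (rule card_Un_le)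
  also have "\<dots> \<le> (3 ^ d) ^ j + (3 ^ d) ^ j" using finite_card_nbr_walks[OF n_pos d_pos] by (intro add_mono) auto
  finally show ?thesis by simp
qed

text \<open>There are at most 2 (3^d)^(m-1) walks of length m, so with t = 3^d e^-alpha / rho
\<le> 1/9 they contribute at most 2 (2m+1) t^m \<le> 2 / 3^m.\<close>

lemma walk_weight_sum_le_one:
  assumes \<rho>: "0 < \<rho>" and \<alpha>: "exp (- \<alpha>) \<le> \<rho> / (9 * 3 ^ d)"
  shows "(\<Sum>cs\<in>walks_at u. exp (- \<alpha> * real (length cs)) * (2 * real (length cs) + 1) / \<rho> ^ length cs) \<le> 1"
proof -
  define N where "N = card (Lam d n)"
  define f where "f m = exp (- \<alpha> * real m) * (2 * real m + 1) / \<rho> ^ m" for m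
  define t where "t = 3 ^ d * exp (- \<alpha>) / \<rho>"
  have t: "0 \<le> t" "t \<le> 1 / 9" unfolding t_def using \<alpha> \<rho> by (simp_all add: field_simps)
  have term_le: "real (card {cs \<in> walks_at u. length cs = m}) * f m \<le> 2 * (1 / 3) ^ m"
    if m: "m \<ge> 1" for m
  proof -
    obtain j where j: "m = Suc j" using m by (cases m) auto
    have f_eq: "f m = exp (- \<alpha>) ^ m * (2 * real m + 1) / \<rho> ^ m"
      unfolding f_def by (simp add: exp_of_nat_mult[symmetric] mult.commute)
    have f_nonneg: "f m \<ge> 0" unfolding f_def using \<rho> by simp
    have "real (card {cs \<in> walks_at u. length cs = m}) \<le> real (2 * (3 ^ d) ^ j)"
      using card_walks_at_length[of u j] j by (simp only: of_nat_le_iff)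
    then have "real (card {cs \<in> walks_at u. length cs = m}) \<le> 2 * (3 ^ d) ^ j" by simp
    then have "real (card {cs \<in> walks_at u. length cs = m}) * f m \<le> (2 * (3 ^ d) ^ j) * f m"
      using f_nonneg by (intro mult_right_mono) auto
    also have "\<dots> \<le> (2 * (3 ^ d) ^ m) * f m"
      using f_nonneg j by (intro mult_right_mono) auto
    also have "\<dots> = 2 * (2 * real m + 1) * t ^ m"
      unfolding f_eq t_def by (simp add: power_divide power_mult_distrib field_simps)
    also have "\<dots> \<le> 2 * 3 ^ m * t ^ m"
      using two_mult_add_one_le_three_pow[of m] t by (intro mult_right_mono) auto
    also have "\<dots> = 2 * (3 * t) ^ m" by (simp add: power_mult_distrib)
    also have "\<dots> \<le> 2 * (1 / 3) ^ m" using t by (intro mult_left_mono power_mono) auto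
    finally show ?thesis .
  qed
  have "(\<Sum>cs\<in>walks_at u. f (length cs)) = (\<Sum>m\<in>{1..N}. \<Sum>cs\<in>{cs \<in> walks_at u. length cs = m}. f (length cs))"
    using length_walks_at unfolding N_def by (intro sum.group[symmetric] finite_walks_at) auto
  also have "\<dots> = (\<Sum>m\<in>{1..N}. real (card {cs \<in> walks_at u. length cs = m}) * f m)" by simp
  also have "\<dots> \<le> (\<Sum>m\<in>{1..N}. 2 * (1 / 3) ^ m)" using term_le by (intro sum_mono) auto
  also have "\<dots> \<le> 1" using sum_two_thirds_powers_le[of N] by (smt (verit) zero_le_power zero_le_divide_iff)
  finally show ?thesis unfolding f_def .
qed

definition near_cone where "near_cone = {u \<in> Lam d n. tdist n (tl u) (tl x) \<le> hd u - hd x}"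

definition far_cone where
  "far_cone = {u \<in> Lam d n. real_of_int (hd u) \<ge> real_of_int (hd x) + ln (real n)}"

lemma Cone_eq: "Cone d n x = near_cone \<union> far_cone"
  unfolding Cone_def near_cone_def far_cone_def by auto

lemma decay_far_le:
  assumes u: "real_of_int (hd u) \<ge> real_of_int (hd x) + ln (real n)"
  shows "decay (rho d) (hd u - hd x + 1) \<le> 1 / real n ^ (d + 1)"
proof -
  let ?k = "hd u - hd x + 1"
  have ln_nonneg: "ln (real n) \<ge> 0" and n_real: "real n > 0" using n_pos by simp_all
  have k_ge: "real (nat ?k) \<ge> ln (real n)" and k_pos: "?k > 0" using u ln_nonneg by linarith+
  have "decay (rho d) ?k = exp (- (3 * real d + 3) * real (nat ?k))"
    using k_pos unfolding decay_def rho_def by (simp add: exp_of_nat_mult[symmetric] mult.commute)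
  also have "\<dots> \<le> exp (- (real (d + 1) * ln (real n)))"
  proof -
    have "real (d + 1) * ln (real n) \<le> (3 * real d + 3) * real (nat ?k)"
      using k_ge ln_nonneg by (intro mult_mono) auto
    then show ?thesis by (subst exp_le_cancel_iff) (simp only: mult_minus_left neg_le_iff_le)
  qed
  also have "\<dots> = 1 / real n ^ (d + 1)"
  proof -
    have "exp (real (d + 1) * ln (real n)) = real n ^ (d + 1)"
      using n_real by (simp only: exp_of_nat_mult exp_ln)
    then show ?thesis by (simp only: exp_minus inverse_eq_divide)
  qed
  finally show ?thesis .
qed

lemma far_cone_decay_sum:
  assumes n_large: "real n \<ge> 4 * 3 ^ d"
  shows "(\<Sum>u\<in>far_cone. decay (rho d) (hd u - hd x + 1)) \<le> 1 / 4"
    (is "sum ?f ?C \<le> _")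
proof -
  have n_real: "real n > 0" using n_pos by simp
  have "sum ?f ?C \<le> real (card ?C) * (1 / real n ^ (d + 1))"
    using decay_far_le unfolding far_cone_def by (intro sum_bounded_above) auto
  also have "\<dots> \<le> real ((2 * n + 1) ^ d) * (1 / real n ^ (d + 1))"
  proof -
    have "card ?C \<le> card (Lam d n)" using finite_Lam unfolding far_cone_def by (intro card_mono) auto
    also have "\<dots> \<le> (2 * n + 1) ^ d" using card_Lam[OF n_pos d_pos x_in_Lam] .
    finally have "real (card ?C) \<le> real ((2 * n + 1) ^ d)" by (simp only: of_nat_le_iff)
    then show ?thesis by (intro mult_right_mono) auto
  qed
  also have "\<dots> \<le> (3 * real n) ^ d * (1 / real n ^ (d + 1))"
  proof -
    have "real (2 * n + 1) \<le> 3 * real n" using n_pos by simp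
    then have "real (2 * n + 1) ^ d \<le> (3 * real n) ^ d" by (intro power_mono) auto
    then show ?thesis by (intro mult_right_mono) auto
  qed
  also have "\<dots> = 3 ^ d / real n" using n_real by (simp add: power_mult_distrib field_simps)
  also have "\<dots> \<le> 1 / 4" using n_large n_real by (simp add: field_simps)
  finally show ?thesis .
qed

lemma card_cone_layer: "card {u \<in> near_cone. nat (hd u - hd x) = h} \<le> (2 * h + 1) ^ d"
proof -
  have sub: "{u \<in> near_cone. nat (hd u - hd x) = h} \<subseteq> box d n x h"
  proof
    fix u assume "u \<in> {u \<in> near_cone. nat (hd u - hd x) = h}"
    then have u: "u \<in> Lam d n" and td: "tdist n (tl u) (tl x) \<le> hd u - hd x"
      and h: "nat (hd u - hd x) = h" unfolding near_cone_def by auto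
    have td_nonneg: "0 \<le> tdist n (tl u) (tl x)" by (rule tdist_nonneg[OF n_pos])
    show "u \<in> box d n x h"
    proof (rule mem_boxI[OF n_pos d_pos x_in_Lam u])
      show "\<bar>hd u - hd x\<bar> \<le> int h" using h td td_nonneg by auto
      fix i assume "i < d - 1"
      then have "cdist n (tl u ! i) (tl x ! i) \<le> tdist n (tl u) (tl x)"
        using cdist_nth_le_tdist[OF _ _ n_pos, of "tl u" "tl x" i] Lam_length[OF u] Lam_length[OF x_in_Lam]
        by simp
      then show "cdist n (tl u ! i) (tl x ! i) \<le> int h" using h td td_nonneg by auto
    qed
  qed
  have "finite (box d n x h)" "card (box d n x h) \<le> (2 * h + 1) ^ d"
    using finite_card_box by blast+
  then show ?thesis using card_mono[OF _ sub] by linarith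
qed

lemma near_cone_decay_sum_le_geometric:
  "(\<Sum>u\<in>near_cone. decay (rho d) (hd u - hd x + 1)) \<le> (\<Sum>h\<in>{0..n}. (3 ^ d * rho d) ^ h) * rho d"
proof -
  let ?\<rho> = "rho d" and ?f = "\<lambda>u. decay (rho d) (hd u - hd x + 1)"
  let ?layer = "\<lambda>h. {u \<in> near_cone. nat (hd u - hd x) = h}"
  have \<rho>: "0 < ?\<rho>" using rho_bounds[OF d_pos] by auto
  have above: "hd u - hd x \<ge> 0" if "u \<in> near_cone" for u
    using that tdist_nonneg[OF n_pos, of "tl u" "tl x"] unfolding near_cone_def by auto
  have layer_range: "nat (hd u - hd x) \<in> {0..n}" if "u \<in> near_cone" for u
    using that Lam_hd_bounds[of u d n] Lam_hd_bounds[OF x_in_Lam] unfolding near_cone_def by auto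
  have "sum ?f near_cone = (\<Sum>h\<in>{0..n}. sum ?f (?layer h))"
    using layer_range finite_Lam unfolding near_cone_def by (intro sum.group[symmetric]) auto
  also have "\<dots> = (\<Sum>h\<in>{0..n}. real (card (?layer h)) * ?\<rho> ^ (h + 1))"
  proof (rule sum.cong[OF refl])
    fix h
    have "?f u = ?\<rho> ^ (h + 1)" if "u \<in> ?layer h" for u
    proof -
      have "nat (hd u - hd x + 1) = h + 1" using that above[of u] by auto
      then show ?thesis using that above[of u] unfolding decay_def by simp
    qed
    then show "sum ?f (?layer h) = real (card (?layer h)) * ?\<rho> ^ (h + 1)" by simp
  qed
  also have "\<dots> \<le> (\<Sum>h\<in>{0..n}. (3 ^ d * ?\<rho>) ^ h * ?\<rho>)"
  proof (rule sum_mono)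
    fix h
    have "real (card (?layer h)) \<le> real ((2 * h + 1) ^ d)"
      using card_cone_layer[of h] by (simp only: of_nat_le_iff)
    also have "\<dots> = (2 * real h + 1) ^ d" by (simp add: add.commute)
    also have "\<dots> \<le> (3 ^ h) ^ d" using two_mult_add_one_le_three_pow[of h] by (intro power_mono) auto
    also have "\<dots> = (3 ^ d) ^ h" by (simp add: power_mult[symmetric] mult.commute)
    finally have "real (card (?layer h)) * ?\<rho> ^ (h + 1) \<le> (3 ^ d) ^ h * ?\<rho> ^ (h + 1)"
      using \<rho> by (intro mult_right_mono) auto
    then show "real (card (?layer h)) * ?\<rho> ^ (h + 1) \<le> (3 ^ d * ?\<rho>) ^ h * ?\<rho>"
      by (simp add: power_mult_distrib mult_ac)
  qed
  also have "\<dots> = (\<Sum>h\<in>{0..n}. (3 ^ d * ?\<rho>) ^ h) * ?\<rho>" by (simp add: sum_distrib_right)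
  finally show ?thesis .
qed

lemma near_cone_decay_sum: "(\<Sum>u\<in>near_cone. decay (rho d) (hd u - hd x + 1)) \<le> 1 / 4"
proof -
  let ?\<rho> = "rho d"
  have \<rho>: "0 < ?\<rho>" "?\<rho> \<le> 1 / 16" "3 ^ d * ?\<rho> \<le> 1 / 4" using rho_bounds[OF d_pos] by auto
  have "(\<Sum>h\<in>{0..n}. (3 ^ d * ?\<rho>) ^ h) \<le> 2 - 2 * (3 ^ d * ?\<rho>) ^ (n + 1)"
    using \<rho> by (intro geometric_sum_half_bound) auto
  also have "\<dots> \<le> 2" using \<rho> by simp
  finally have "(\<Sum>h\<in>{0..n}. (3 ^ d * ?\<rho>) ^ h) * ?\<rho> \<le> 2 * ?\<rho>" using \<rho> by (intro mult_right_mono) auto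
  then show ?thesis using near_cone_decay_sum_le_geometric \<rho>(2) by linarith
qed

lemma cone_decay_sum:
  assumes "real n \<ge> 4 * 3 ^ d"
  shows "(\<Sum>u\<in>Cone d n x. decay (rho d) (hd u - hd x + 1)) \<le> 1 / 2"
proof -
  let ?f = "\<lambda>u. decay (rho d) (hd u - hd x + 1)"
  have "sum ?f (near_cone \<union> far_cone) + sum ?f (near_cone \<inter> far_cone) = sum ?f near_cone + sum ?f far_cone"
    by (rule sum.union_inter) (simp_all add: near_cone_def far_cone_def finite_Lam)
  moreover have "sum ?f (near_cone \<inter> far_cone) \<ge> 0"
    using decay_nonneg rho_bounds[OF d_pos] by (simp add: sum_nonneg)
  ultimately show ?thesis
    unfolding Cone_eq using near_cone_decay_sum far_cone_decay_sum[OF assms] by linarith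
qed

lemma non_regen_mass_le_half:
  assumes pre: "prereg d n g x" and n_large: "real n \<ge> 4 * 3 ^ d"
    and \<alpha>: "\<alpha> > 3 * real d + 3 + ln (9 * 3 ^ d)"
  shows "sum (wt \<alpha>) {\<pi> \<in> Sg. \<not> regen d n A y \<pi> x} \<le> 1 / 2 * sum (wt \<alpha>) Sg"
proof -
  have \<rho>: "0 < rho d" "rho d \<le> 1" using rho_bounds[OF d_pos] by auto
  have fixing_empty: "fixing {} = Sg" unfolding fixing_def by simp
  have descent_le: "descent_mass \<alpha> {} u k \<le> decay (rho d) k * mass \<alpha> {}" if "u \<in> Lam d n" for u k
    using descent_mass_le_decay[OF \<rho> walk_weight_sum_le_one[OF \<rho>(1) exp_neg_alpha_le[OF \<alpha>]] that] .
  have "sum (wt \<alpha>) {\<pi> \<in> Sg. \<not> regen d n A y \<pi> x}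
      \<le> (\<Sum>u\<in>Cone d n x. sum (wt \<alpha>) {\<pi> \<in> fixing {}. descends (pi0 \<pi> y) u (hd u - hd x + 1)})"
  proof (rule sum_le_sum_over_cover)
    show "\<forall>s\<in>{\<pi> \<in> Sg. \<not> regen d n A y \<pi> x}. \<exists>v\<in>Cone d n x.
            s \<in> {\<pi> \<in> fixing {}. descends (pi0 \<pi> y) v (hd v - hd x + 1)}"
      using regen_if_no_descent[OF _ pre] fixing_empty by blast
  qed (use finite_Sg finite_fixing wt_nonneg in \<open>auto simp: Cone_def finite_Lam\<close>)
  also have "\<dots> = (\<Sum>u\<in>Cone d n x. descent_mass \<alpha> {} u (hd u - hd x + 1))"
    unfolding descent_mass_def ..
  also have "\<dots> \<le> (\<Sum>u\<in>Cone d n x. decay (rho d) (hd u - hd x + 1)) * mass \<alpha> {}"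
    unfolding sum_distrib_right using descent_le Cone_above by (intro sum_mono) blast
  also have "\<dots> \<le> 1 / 2 * mass \<alpha> {}"
    using cone_decay_sum[OF n_large] mass_nonneg by (intro mult_right_mono) auto
  finally show ?thesis unfolding mass_def fixing_empty .
qed

lemma cond_prob_ge_half:
  assumes pre: "prereg d n g x" and n_large: "real n \<ge> 4 * 3 ^ d"
    and \<alpha>: "\<alpha> > 3 * real d + 3 + ln (9 * 3 ^ d)"
  shows "cond_prob d n \<alpha> A y g x \<ge> 1 / 2"
proof -
  let ?G = "{\<pi> \<in> Sg. regen d n A y \<pi> x}" and ?B = "{\<pi> \<in> Sg. \<not> regen d n A y \<pi> x}"
  have split: "sum (wt \<alpha>) Sg = sum (wt \<alpha>) ?G + sum (wt \<alpha>) ?B"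
    using finite_Sg by (subst sum.union_disjoint[symmetric]) (auto intro: sum.cong)
  have "wt \<alpha> succ_map \<le> sum (wt \<alpha>) Sg"
    using succ_map_in_Sg finite_Sg wt_nonneg by (intro member_le_sum) auto
  then have pos: "sum (wt \<alpha>) Sg > 0" using wt_pos[of \<alpha> succ_map] by linarith
  have "cond_prob d n \<alpha> A y g x = sum (wt \<alpha>) ?G / sum (wt \<alpha>) Sg"
    unfolding cond_prob_def Sg_def by (simp add: conj_assoc)
  moreover have "sum (wt \<alpha>) ?G \<ge> 1 / 2 * sum (wt \<alpha>) Sg"
    using split non_regen_mass_le_half[OF assms] by linarith
  ultimately show ?thesis using pos by (simp add: le_divide_eq)
qed

end

theorem proposition5p5:
  fixes d :: nat
  assumes "d \<ge> 2"
  shows "\<exists>\<alpha>0::real. \<exists>c::real. c > 0 \<and> (\<exists>n0::nat. \<forall>n\<ge>n0. \<forall>\<alpha>>\<alpha>0.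
     \<forall>y\<in>Lam d n. \<forall>A. A \<subseteq> Lam d n \<longrightarrow> weakly_adm d n y A \<longrightarrow>
     (\<forall>\<gamma>0. saw d n A y \<gamma>0 \<longrightarrow>
       (\<forall>x. prereg d n \<gamma>0 x \<longrightarrow> real_of_int (hd x - hd y) \<ge> ln (real n) \<longrightarrow>
          cond_prob d n \<alpha> A y \<gamma>0 x > c)))"
proof (rule exI[of _ "3 * real d + 3 + ln (9 * 3 ^ d)"], rule exI[of _ "1 / 4"],
    intro conjI exI[of _ "4 * 3 ^ d"] allI impI ballI)
  show "(0::real) < 1 / 4" by simp
  fix n :: nat and \<alpha> :: real and y A \<gamma>0 x
  assume n: "4 * 3 ^ d \<le> n" and \<alpha>: "3 * real d + 3 + ln (9 * 3 ^ d) < \<alpha>"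
    and "A \<subseteq> Lam d n" "weakly_adm d n y A" "saw d n A y \<gamma>0"
    and pre: "prereg d n \<gamma>0 x" and "ln (real n) \<le> real_of_int (hd x - hd y)"
  moreover have "n \<ge> 1" using n one_le_power[of "3::nat" d] by linarith
  moreover have "x \<in> set \<gamma>0" using pre unfolding prereg_def by simp
  ultimately interpret regen_setting d n A y \<gamma>0 x using assms by unfold_locales auto
  have "real n \<ge> 4 * 3 ^ d" using n by (metis of_nat_le_iff of_nat_mult of_nat_numeral of_nat_power)
  then show "1 / 4 < cond_prob d n \<alpha> A y \<gamma>0 x" using cond_prob_ge_half[OF pre _ \<alpha>] by simp
qed

end
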